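(* Let $Y$ be a right canonical matrix for $T$ at $\lambda_0$. Then the elements $[Y\Delta^{-1}\chi_0^{j-1}e_i]\in\mathcal{M}^n/\mathcal{H}_0^n$, for $i=1,\dots,r$ and $j=1,\dots,m_i$ (with $e_i$ the $i$-th unit vector of $\mathbb{C}^r$), form a basis over $\mathbb{C}$ of $\ker\overline{T}$, where $\overline{T}[y]=[Ty]$.
   Context: Let $\Omega\subset\mathbb{C}$ be open and $\lambda_0\in\Omega$ fixed. $\mathcal{H}$ denotes the ring of holomorphic functions on $\Omega$, $\mathcal{M}$ the field of meromorphic functions on $\Omega$, and $\mathcal{H}_0$ the ring of functions holomorphic in some neighborhood of $\lambda_0$. $\chi_0(\lambda)=\lambda-\lambda_0$. $\mathcal{M}^n/\mathcal{H}_0^n$ denotes meromorphic vectors modulo those holomorphic near $\lambda_0$, $[y]$ the class of $y$, and $\overline{T}$ the induced $\mathbb{C}$-linear map $[y]\mapsto[Ty]$ on this quotient. Throughout, $T\in\mathcal{H}^{n\times n}$ with $\det T$ not identically zero and $\det T(\lambda_0)=0$, and $r=\dim\ker T(\lambda_0)$. There exist $U_L,U_R\in\mathcal{H}_0^{n\times n}$ with $U_L(\lambda_0),U_R(\lambda_0)$ nonsingular and uniquely determined integers $m_1\ge\cdots\ge m_n\ge 0$ (the partial multiplicities) with $U_LTU_R=\mathrm{diag}(\chi_0^{m_1},\dots,\chi_0^{m_n})$; $m_i>0$ exactly for $i\le r$. Set $\Delta=\mathrm{diag}(\chi_0^{m_1},\dots,\chi_0^{m_r})$. A root function for $T$ at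 $\lambda_0$ is $y\in\mathcal{H}^n$ with $y(\lambda_0)\neq0$ and $T(\lambda_0)y(\lambda_0)=0$; its multiplicity $\nu(y)$ is the order of the zero of $Ty$ at $\lambda_0$. A right canonical matrix for $T$ at $\lambda_0$ is $Y\in\mathcal{H}^{n\times r}$ whose columns $y_1,\dots,y_r$ are root functions such that (a) $y_1(\lambda_0),\dots,y_r(\lambda_0)$ are linearly independent, (b) $\sum_{i=1}^r\nu(y_i)=\sum_{i=1}^r m_i$, (c) $\nu(y_1)\ge\cdots\ge\nu(y_r)$. *)

theory Defs
  imports "HOL-Complex_Analysis.Complex_Analysis" "Jordan_Normal_Form.Determinant"
    "Jordan_Normal_Form.Matrix_Kernel"
begin

text \<open>Vectors in \<open>\<complex>^n\<close> are JNF vectors \<open>complex vec\<close> of dimension n,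
  matrices are \<open>complex mat\<close>; indices start at 0. A (vector/matrix valued) function of
  \<open>\<lambda>\<close> is a function \<open>complex \<Rightarrow> complex vec\<close> (resp. \<open>complex mat\<close>) whose values have the
  right dimension everywhere; holomorphy/meromorphy is required entrywise.
  Meromorphic functions are only relevant up to values at isolated points, which is
  how HOL's \<open>meromorphic_on\<close> works (it only speaks about punctured neighbourhoods).\<close>

definition hol_vec :: "nat \<Rightarrow> complex set \<Rightarrow> (complex \<Rightarrow> complex vec) \<Rightarrow> bool" where
  "hol_vec n \<Omega> y \<longleftrightarrow> (\<forall>z. y z \<in> carrier_vec n) \<and> (\<forall>i<n. (\<lambda>z. y z $ i) holomorphic_on \<Omega>)"

definition hol_mat :: "nat \<Rightarrow> nat \<Rightarrow> complex set \<Rightarrow> (complex \<Rightarrow> complex mat) \<Rightarrow> bool" where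
  "hol_mat n k \<Omega> A \<longleftrightarrow> (\<forall>z. A z \<in> carrier_mat n k) \<and>
     (\<forall>i<n. \<forall>j<k. (\<lambda>z. A z $$ (i,j)) holomorphic_on \<Omega>)"

definition hol0_mat :: "nat \<Rightarrow> complex \<Rightarrow> (complex \<Rightarrow> complex mat) \<Rightarrow> bool" where
  "hol0_mat n l0 A \<longleftrightarrow> (\<forall>z. A z \<in> carrier_mat n n) \<and>
     (\<forall>i<n. \<forall>j<n. (\<lambda>z. A z $$ (i,j)) analytic_on {l0})"

definition mero_vec :: "nat \<Rightarrow> complex set \<Rightarrow> (complex \<Rightarrow> complex vec) \<Rightarrow> bool" where
  "mero_vec n \<Omega> y \<longleftrightarrow> (\<forall>z. y z \<in> carrier_vec n) \<and> (\<forall>i<n. (\<lambda>z. y z $ i) meromorphic_on \<Omega>)"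

text \<open>A meromorphic vector lies in \<open>\<H>_0^n\<close>: each component coincides (as a meromorphic
  function, i.e. on a punctured neighbourhood of \<open>l0\<close>) with a function holomorphic in a
  neighbourhood of \<open>l0\<close>. Thus \<open>[y] = [y']\<close> in \<open>\<M>^n/\<H>_0^n\<close> iff \<open>hol0_vec n l0 (y - y')\<close>.\<close>
definition hol0_vec :: "nat \<Rightarrow> complex \<Rightarrow> (complex \<Rightarrow> complex vec) \<Rightarrow> bool" where
  "hol0_vec n l0 y \<longleftrightarrow>
     (\<forall>i<n. \<exists>g. g analytic_on {l0} \<and> (\<forall>\<^sub>F w in at l0. y w $ i = g w))"

text \<open>Partial multiplicities: \<open>U\<^sub>L T U\<^sub>R = diag(\<chi>\<^sub>0^{m_1},\<dots>,\<chi>\<^sub>0^{m_n})\<close> near \<open>l0\<close>,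
  with \<open>m_1 \<ge> \<dots> \<ge> m_n\<close> (here indexed \<open>m 0 \<ge> \<dots> \<ge> m (n-1)\<close>).\<close>
definition partial_multiplicities ::
  "nat \<Rightarrow> (complex \<Rightarrow> complex mat) \<Rightarrow> complex \<Rightarrow> (nat \<Rightarrow> nat) \<Rightarrow> bool" where
  "partial_multiplicities n T l0 m \<longleftrightarrow>
     (\<forall>i j. i \<le> j \<longrightarrow> j < n \<longrightarrow> m j \<le> m i) \<and>
     (\<exists>UL UR. hol0_mat n l0 UL \<and> hol0_mat n l0 UR \<and>
        det (UL l0) \<noteq> 0 \<and> det (UR l0) \<noteq> 0 \<and>
        (\<forall>\<^sub>F z in nhds l0. UL z * T z * UR z = mat_diag n (\<lambda>i. (z - l0) ^ m i)))"

definition root_function ::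
  "nat \<Rightarrow> complex set \<Rightarrow> (complex \<Rightarrow> complex mat) \<Rightarrow> complex \<Rightarrow> (complex \<Rightarrow> complex vec) \<Rightarrow> bool" where
  "root_function n \<Omega> T l0 y \<longleftrightarrow>
     hol_vec n \<Omega> y \<and> y l0 \<noteq> 0\<^sub>v n \<and> T l0 *\<^sub>v y l0 = 0\<^sub>v n"

definition zero_order_vec :: "nat \<Rightarrow> (complex \<Rightarrow> complex vec) \<Rightarrow> complex \<Rightarrow> nat" where
  "zero_order_vec n f l0 = (THE k. \<exists>g. (\<forall>z. g z \<in> carrier_vec n) \<and>
      (\<forall>i<n. (\<lambda>z. g z $ i) analytic_on {l0}) \<and> g l0 \<noteq> 0\<^sub>v n \<and>
      (\<forall>\<^sub>F z in nhds l0. f z = (z - l0) ^ k \<cdot>\<^sub>v g z))"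

definition root_mult :: "nat \<Rightarrow> (complex \<Rightarrow> complex mat) \<Rightarrow> complex \<Rightarrow> (complex \<Rightarrow> complex vec) \<Rightarrow> nat" where
  "root_mult n T l0 y = zero_order_vec n (\<lambda>z. T z *\<^sub>v y z) l0"

definition right_canonical_matrix ::
  "nat \<Rightarrow> nat \<Rightarrow> complex set \<Rightarrow> (complex \<Rightarrow> complex mat) \<Rightarrow> complex \<Rightarrow> (nat \<Rightarrow> nat)
     \<Rightarrow> (complex \<Rightarrow> complex mat) \<Rightarrow> bool" where
  "right_canonical_matrix n r \<Omega> T l0 m Y \<longleftrightarrow>
     hol_mat n r \<Omega> Y \<and>
     (\<forall>i<r. root_function n \<Omega> T l0 (\<lambda>z. col (Y z) i)) \<and>
     (\<forall>c \<in> carrier_vec r. Y l0 *\<^sub>v c = 0\<^sub>v n \<longrightarrow> c = 0\<^sub>v r) \<and>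
     (\<Sum>i<r. root_mult n T l0 (\<lambda>z. col (Y z) i)) = (\<Sum>i<r. m i) \<and>
     (\<forall>i j. i \<le> j \<longrightarrow> j < r \<longrightarrow>
        root_mult n T l0 (\<lambda>z. col (Y z) j) \<le> root_mult n T l0 (\<lambda>z. col (Y z) i))"

definition lin_comb :: "nat \<Rightarrow> 'k set \<Rightarrow> ('k \<Rightarrow> complex) \<Rightarrow> ('k \<Rightarrow> complex \<Rightarrow> complex vec)
    \<Rightarrow> complex \<Rightarrow> complex vec" where
  "lin_comb n K c v z = vec n (\<lambda>l. \<Sum>k\<in>K. c k * (v k z $ l))"

text \<open>The classes \<open>[v k]\<close>, \<open>k \<in> K\<close>, form a \<open>\<complex>\<close>-basis of \<open>ker \<overline>T\<close> in \<open>\<M>^n/\<H>_0^n\<close>,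
  where \<open>ker \<overline>T = {[y] | y \<in> \<M>^n, Ty \<in> \<H>_0^n}\<close>.\<close>
definition basis_of_ker_Tbar ::
  "nat \<Rightarrow> complex set \<Rightarrow> (complex \<Rightarrow> complex mat) \<Rightarrow> complex \<Rightarrow> 'k set
     \<Rightarrow> ('k \<Rightarrow> complex \<Rightarrow> complex vec) \<Rightarrow> bool" where
  "basis_of_ker_Tbar n \<Omega> T l0 K v \<longleftrightarrow>
     finite K \<and>
     (\<forall>k\<in>K. mero_vec n \<Omega> (v k) \<and> hol0_vec n l0 (\<lambda>z. T z *\<^sub>v v k z)) \<and>
     (\<forall>c. hol0_vec n l0 (lin_comb n K c v) \<longrightarrow> (\<forall>k\<in>K. c k = 0)) \<and>
     (\<forall>y. mero_vec n \<Omega> y \<and> hol0_vec n l0 (\<lambda>z. T z *\<^sub>v y z) \<longrightarrow>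
        (\<exists>c. hol0_vec n l0 (\<lambda>z. y z - lin_comb n K c v z)))"

end

theory Submission
  imports Defs
begin

(* Near l0 write U_L T U_R = diag(chi^(m_l)), where chi z = z - l0. If u is holomorphic and T u
   vanishes to order p at l0, then diag(chi^(m_l)) adj(U_R) u = det(U_R) U_L T u shows that the
   entries of adj(U_R(l0)) u(l0) with m_l < p vanish. Applied to the columns y_i of Y, whose values
   at l0 are independent, this gives nu(y_i) <= m_i, hence nu(y_i) = m_i by the sum condition;
   applied to an arbitrary u it shows that u(l0) is a combination of the y_i(l0) with m_i >= p.
   The classes of chi^(j-1-m_i) y_i are independent: multiplying a combination by chi^P, P the
   largest pole order carrying a nonzero coefficient, and evaluating at l0 leaves a vanishing
   combination of the y_i(l0). They span by induction on the pole order: if chi^(p+1) y = u is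
   holomorphic, u(l0) = sum c_i y_i(l0) with m_i > p, and subtracting sum c_i chi^(-p-1) y_i
   lowers the order of the pole. *)

no_notation Finite_Cartesian_Product.vec_nth (infixl \<open>$\<close> 90)
no_notation Formal_Power_Series.fps_nth (infixl \<open>$\<close> 75)

section \<open>Matrix algebra\<close>

lemma mult_mat_vec_index:
  assumes "A \<in> carrier_mat a b" "x \<in> carrier_vec b" "l < a"
  shows "(A *\<^sub>v x) $ l = (\<Sum>j<b. A $$ (l,j) * x $ j)"
  using assms by (auto simp: scalar_prod_def atLeast0LessThan)

lemma mat_diag_mult_vec_index:
  assumes "x \<in> carrier_vec k" "l < k"
  shows "(mat_diag k f *\<^sub>v x) $ l = f l * x $ l"
proof -
  have "(mat_diag k f *\<^sub>v x) $ l = (\<Sum>j<k. if j = l then f l * x $ j else 0)"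
    unfolding mult_mat_vec_index[OF mat_diag_dim assms] by (rule sum.cong) (auto simp: mat_diag_def assms)
  then show ?thesis using assms(2) by simp
qed

lemma mult_mat_vec_unit_vec:
  fixes A :: "'a::semiring_1 mat"
  assumes "A \<in> carrier_mat nr nc" "i < nc"
  shows "A *\<^sub>v unit_vec nc i = col A i"
  using assms by (intro eq_vecI) auto

lemma mult_adj_mat_vec:
  fixes A :: "'a::comm_ring_1 mat"
  assumes A: "A \<in> carrier_mat n n" and v: "v \<in> carrier_vec n"
  shows "A *\<^sub>v (adj_mat A *\<^sub>v v) = det A \<cdot>\<^sub>v v"
proof -
  have "A * adj_mat A = mat_diag n (\<lambda>_. det A)"
    using adj_mat(2)[OF A] by (auto simp: mat_diag_def intro!: eq_matI)
  then have "A *\<^sub>v (adj_mat A *\<^sub>v v) = mat_diag n (\<lambda>_. det A) *\<^sub>v v"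
    using assoc_mult_mat_vec[OF A adj_mat(1)[OF A] v] by simp
  also have "\<dots> = det A \<cdot>\<^sub>v v"
  proof (rule eq_vecI)
    fix i assume "i < dim_vec (det A \<cdot>\<^sub>v v)"
    then show "(mat_diag n (\<lambda>_. det A) *\<^sub>v v) $ i = (det A \<cdot>\<^sub>v v) $ i"
      using v by (subst mat_diag_mult_vec_index[OF v]) auto
  qed (use v in \<open>simp add: mat_diag_def\<close>)
  finally show ?thesis .
qed

lemma sum_lessThan_zero_ext:
  fixes m k :: nat and c f :: "nat \<Rightarrow> 'a::semiring_0"
  assumes "m \<le> k"
  shows "(\<Sum>j<k. (if j < m then c j else 0) * f j) = (\<Sum>j<m. c j * f j)"
proof -
  have "{..<k} \<inter> {j. j < m} = {..<m}"
    using assms by auto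
  moreover have "(\<Sum>j<k. (if j < m then c j else 0) * f j) = (\<Sum>j<k. if j < m then c j * f j else 0)"
    by (rule sum.cong) auto
  ultimately show ?thesis
    by (simp add: sum.If_cases)
qed

lemma mult_mat_vec_zero_ext_index:
  assumes "W \<in> carrier_mat n r" "k \<le> r" "l < n"
  shows "(W *\<^sub>v vec r (\<lambda>j. if j < k then c j else 0)) $ l = (\<Sum>j<k. W $$ (l,j) * c j)"
proof -
  have "{..<r} \<inter> {j. j < k} = {..<k}"
    using assms(2) by auto
  moreover have "(W *\<^sub>v vec r (\<lambda>j. if j < k then c j else 0)) $ l
      = (\<Sum>j<r. if j < k then W $$ (l,j) * c j else 0)"
    unfolding mult_mat_vec_index[OF assms(1) vec_carrier assms(3)] by (rule sum.cong) auto
  ultimately show ?thesis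
    by (simp add: sum.If_cases)
qed

lemma eventually_vec_eqI:
  assumes "\<And>z. f z \<in> carrier_vec n" "\<And>z. g z \<in> carrier_vec n"
    and "\<And>i. i < n \<Longrightarrow> \<forall>\<^sub>F z in F. f z $ i = g z $ i"
  shows "\<forall>\<^sub>F z in F. f z = g z"
proof -
  have "\<forall>\<^sub>F z in F. \<forall>i\<in>{..<n}. f z $ i = g z $ i"
    using assms(3) by (intro eventually_ball_finite) auto
  then show ?thesis
  proof eventually_elim
    case (elim z)
    show ?case
      using elim assms(1,2)[of z] by (intro eq_vecI) auto
  qed
qed

lemma vec_eq_of_diff_eq_0:
  assumes "u \<in> carrier_vec n" "v \<in> carrier_vec n" "u - v = (0\<^sub>v n :: 'a::ab_group_add vec)"
  shows "u = v"
proof (rule eq_vecI)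
  fix l assume "l < dim_vec v"
  have "(u - v) $ l = 0\<^sub>v n $ l"
    by (simp only: assms(3))
  then show "u $ l = v $ l"
    using assms(1,2) \<open>l < dim_vec v\<close> by simp
qed (use assms in simp)

lemma inj_square_mat_surj:
  fixes B :: "'a::field mat"
  assumes B: "B \<in> carrier_mat s s" and inj: "\<And>c. c \<in> carrier_vec s \<Longrightarrow> B *\<^sub>v c = 0\<^sub>v s \<Longrightarrow> c = 0\<^sub>v s"
    and w: "w \<in> carrier_vec s"
  shows "\<exists>c\<in>carrier_vec s. B *\<^sub>v c = w"
proof -
  have "det B \<noteq> 0"
    using det_0_iff_vec_prod_zero[OF B] inj by blast
  from det_non_zero_imp_unit[OF B this, unfolded Units_def, of "()"]
  obtain C where C: "C \<in> carrier_mat s s" and BC: "B * C = 1\<^sub>m s"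
    by (auto simp: ring_mat_def)
  have "B *\<^sub>v (C *\<^sub>v w) = w"
    using assoc_mult_mat_vec[OF B C w] BC w by simp
  then show ?thesis
    using C w by (intro bexI[of _ "C *\<^sub>v w"]) auto
qed

lemma indep_supported_family_spans:
  fixes x :: "nat \<Rightarrow> nat \<Rightarrow> 'a::field"
  assumes "s \<le> n"
    and supp: "\<And>j l. j < s \<Longrightarrow> s \<le> l \<Longrightarrow> l < n \<Longrightarrow> x j l = 0"
    and indep: "\<And>c. \<forall>l<n. (\<Sum>j<s. c j * x j l) = 0 \<Longrightarrow> \<forall>j<s. c j = 0"
    and w: "\<And>l. s \<le> l \<Longrightarrow> l < n \<Longrightarrow> w l = 0"
  shows "\<exists>c. \<forall>l<n. w l = (\<Sum>j<s. c j * x j l)"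
proof -
  define B where "B = mat s s (\<lambda>(l, j). x j l)"
  have B: "B \<in> carrier_mat s s"
    unfolding B_def by simp
  have B_index: "(B *\<^sub>v c) $ l = (\<Sum>j<s. c $ j * x j l)" if "c \<in> carrier_vec s" "l < s" for c l
    unfolding mult_mat_vec_index[OF B that] using that(2)
    by (intro sum.cong) (auto simp: B_def mult.commute)
  have "\<exists>c\<in>carrier_vec s. B *\<^sub>v c = vec s w"
  proof (rule inj_square_mat_surj[OF B _ vec_carrier])
    fix c :: "'a vec" assume c: "c \<in> carrier_vec s" "B *\<^sub>v c = 0\<^sub>v s"
    have "(\<Sum>j<s. c $ j * x j l) = 0" if "l < n" for l
    proof (cases "l < s")
      case True
      then show ?thesis using B_index[OF c(1) True] c(2) by simp
    next
      case False
      then show ?thesis using supp that by simp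
    qed
    then have "\<forall>j<s. c $ j = 0"
      using indep by blast
    then show "c = 0\<^sub>v s"
      using c(1) by (intro eq_vecI) auto
  qed
  then obtain c where c: "c \<in> carrier_vec s" "B *\<^sub>v c = vec s w"
    by blast
  have "w l = (\<Sum>j<s. c $ j * x j l)" if "l < n" for l
  proof (cases "l < s")
    case True
    then have "(B *\<^sub>v c) $ l = w l" using c(2) by simp
    then show ?thesis
      using B_index[OF c(1) True] by simp
  next
    case False
    then show ?thesis
      using w supp that by simp
  qed
  then show ?thesis by blast
qed

text \<open>If \<open>s < k\<close>, the first \<open>s\<close> members span all vectors supported in the first \<open>s\<close>
  coordinates, among them member number \<open>s\<close>.\<close>
lemma indep_supported_family_card_le:
  fixes x :: "nat \<Rightarrow> nat \<Rightarrow> 'a::field"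
  assumes supp: "\<And>j l. j < k \<Longrightarrow> s \<le> l \<Longrightarrow> l < n \<Longrightarrow> x j l = 0"
    and indep: "\<And>c. \<forall>l<n. (\<Sum>j<k. c j * x j l) = 0 \<Longrightarrow> \<forall>j<k. c j = 0"
  shows "k \<le> s"
proof (rule ccontr)
  assume "\<not> k \<le> s"
  define t where "t = min s n"
  have t: "t < k" "t \<le> n"
    using \<open>\<not> k \<le> s\<close> by (auto simp: t_def)
  have "\<exists>c. \<forall>l<n. x t l = (\<Sum>j<t. c j * x j l)"
  proof (rule indep_supported_family_spans[OF t(2)])
    show "x j l = 0" if "j < t" "t \<le> l" "l < n" for j l
      using supp that t by (simp add: t_def)
    show "x t l = 0" if "t \<le> l" "l < n" for l
      using supp that t by (simp add: t_def)
    fix c assume c: "\<forall>l<n. (\<Sum>j<t. c j * x j l) = 0"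
    have "(\<Sum>j<k. (if j < t then c j else 0) * x j l) = (\<Sum>j<t. c j * x j l)" for l
      using t(1) by (intro sum_lessThan_zero_ext) simp
    then have "\<forall>l<n. (\<Sum>j<k. (if j < t then c j else 0) * x j l) = 0"
      using c by simp
    then have "\<forall>j<k. (if j < t then c j else 0) = 0"
      by (rule indep)
    then show "\<forall>j<t. c j = 0"
      using t(1) by (metis less_trans)
  qed
  then obtain c where c: "\<And>l. l < n \<Longrightarrow> x t l = (\<Sum>j<t. c j * x j l)"
    by blast
  define d where "d j = (if j < t then c j else if j = t then -1 else 0)" for j
  have "(\<Sum>j<k. d j * x j l) = 0" if "l < n" for l
  proof -
    have "(\<Sum>j<k. d j * x j l) = (\<Sum>j<Suc t. d j * x j l)"
      using t(1) by (intro sum.mono_neutral_right) (auto simp: d_def)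
    also have "\<dots> = (\<Sum>j<t. c j * x j l) - x t l"
      by (simp add: d_def)
    finally show ?thesis
      using c[OF that] by simp
  qed
  then have "d t = 0"
    using indep t(1) by blast
  then show False
    by (simp add: d_def)
qed

lemma inj_mat_cols_indep:
  fixes W :: "'a::field mat"
  assumes W: "W \<in> carrier_mat n r" and inj: "\<And>c. c \<in> carrier_vec r \<Longrightarrow> W *\<^sub>v c = 0\<^sub>v n \<Longrightarrow> c = 0\<^sub>v r"
    and "k \<le> r" and c: "\<forall>l<n. (\<Sum>j<k. c j * W $$ (l,j)) = 0"
  shows "\<forall>j<k. c j = 0"
proof -
  define cv where "cv = vec r (\<lambda>j. if j < k then c j else 0)"
  have "W *\<^sub>v cv = 0\<^sub>v n"
  proof (rule eq_vecI)
    fix l assume "l < dim_vec (0\<^sub>v n :: 'a vec)"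
    then have l: "l < n" by simp
    have "(W *\<^sub>v cv) $ l = (\<Sum>j<k. c j * W $$ (l,j))"
      unfolding cv_def mult_mat_vec_zero_ext_index[OF W \<open>k \<le> r\<close> l] by (simp add: mult.commute)
    then show "(W *\<^sub>v cv) $ l = 0\<^sub>v n $ l"
      using c l by simp
  qed (use W in simp)
  then have "cv = 0\<^sub>v r"
    by (rule inj[rotated]) (simp add: cv_def)
  show ?thesis
  proof (intro allI impI)
    fix j assume "j < k"
    then have "cv $ j = 0"
      using \<open>cv = 0\<^sub>v r\<close> \<open>k \<le> r\<close> by simp
    then show "c j = 0"
      using \<open>j < k\<close> \<open>k \<le> r\<close> by (simp add: cv_def)
  qed
qed

lemma inj_mat_inj_on_col:
  fixes W :: "'a::field mat"
  assumes W: "W \<in> carrier_mat n r" and inj: "\<And>c. c \<in> carrier_vec r \<Longrightarrow> W *\<^sub>v c = 0\<^sub>v n \<Longrightarrow> c = 0\<^sub>v r"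
  shows "inj_on (col W) {..<r}"
proof (rule inj_onI, rule ccontr)
  fix a b assume a: "a \<in> {..<r}" and b: "b \<in> {..<r}" and ab: "col W a = col W b" "a \<noteq> b"
  define c :: "nat \<Rightarrow> 'a" where "c j = (if j = a then 1 else 0) - (if j = b then 1 else 0)" for j
  have "c j * W $$ (l,j) = (if j = a then W $$ (l,j) else 0) - (if j = b then W $$ (l,j) else 0)" for j l
    by (simp add: c_def left_diff_distrib)
  then have "(\<Sum>j<r. c j * W $$ (l,j)) = W $$ (l,a) - W $$ (l,b)" for l
    using a b by (simp add: sum_subtractf)
  moreover have "W $$ (l,a) = W $$ (l,b)" if "l < n" for l
    using arg_cong[OF ab(1), of "\<lambda>v. v $ l"] W a b that by simp
  ultimately have "c a = 0"
    using inj_mat_cols_indep[OF W inj order.refl, of c] a by simp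
  then show False
    using ab(2) by (simp add: c_def)
qed

lemma card_le_kernel_dim:
  fixes A W :: "'a::field mat"
  assumes A: "A \<in> carrier_mat nr nc" and W: "W \<in> carrier_mat nc r"
    and inj: "\<And>c. c \<in> carrier_vec r \<Longrightarrow> W *\<^sub>v c = 0\<^sub>v nc \<Longrightarrow> c = 0\<^sub>v r"
    and "k \<le> r" and ker: "\<And>j. j < k \<Longrightarrow> A *\<^sub>v col W j = 0\<^sub>v nr"
  shows "k \<le> kernel_dim A"
proof -
  interpret K: kernel nr nc A
    by unfold_locales (rule A)
  have indep: "\<forall>j<k. c j = 0" if "\<forall>l<nc. (\<Sum>j<k. c j * W $$ (l,j)) = 0" for c
    using inj_mat_cols_indep[OF W inj \<open>k \<le> r\<close> that] .
  have col_index: "col W j $ l = W $$ (l,j)" if "j < k" "l < nc" for j l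
    using W that \<open>k \<le> r\<close> by simp
  have "inj_on (col W) {..<r}"
  proof (rule inj_mat_inj_on_col[OF W])
    fix c assume "c \<in> carrier_vec r" "W *\<^sub>v c = 0\<^sub>v nc"
    then show "c = 0\<^sub>v r" by (rule inj)
  qed
  then have inj_col: "inj_on (col W) {..<k}"
    by (rule inj_on_subset) (use \<open>k \<le> r\<close> in auto)
  define X where "X = col W ` {..<k}"
  have sub: "X \<subseteq> mat_kernel A"
    unfolding X_def using ker W \<open>k \<le> r\<close> by (auto intro!: mat_kernelI[OF A])
  have "finite X"
    unfolding X_def by simp
  have "K.lin_indpt X"
  proof (rule K.Ker.finite_lin_indpt2[OF \<open>finite X\<close> sub])
    fix a assume "a \<in> X \<rightarrow> UNIV" and lc: "K.lincomb a X = 0\<^sub>v nc"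
    have "(\<Sum>j<k. a (col W j) * W $$ (l,j)) = 0" if l: "l < nc" for l
    proof -
      have "(\<Sum>j<k. a (col W j) * W $$ (l,j)) = (\<Sum>v\<in>X. a v * v $ l)"
        unfolding X_def sum.reindex[OF inj_col] using col_index l by simp
      also have "\<dots> = K.lincomb a X $ l"
        by (rule K.lincomb_index[OF l sub, symmetric])
      finally show ?thesis
        using lc l by simp
    qed
    then have "\<forall>j<k. a (col W j) = 0"
      using indep[of "\<lambda>j. a (col W j)"] by blast
    then show "\<forall>v\<in>X. a v = 0"
      unfolding X_def by blast
  qed
  moreover have "K.Ker.fin_dim"
    using kernel_basis_exists[OF A] unfolding K.Ker.fin_dim_def K.Ker.basis_def by blast
  ultimately have "card X \<le> K.dim"
    using K.Ker.li_le_dim(2) sub by blast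
  moreover have "card X = k"
    unfolding X_def using card_image[OF inj_col] by simp
  ultimately show ?thesis
    by simp
qed

section \<open>Germs at a point\<close>

definition hol0 :: "complex \<Rightarrow> (complex \<Rightarrow> complex) \<Rightarrow> bool" where
  "hol0 l0 f \<longleftrightarrow> (\<exists>g. g analytic_on {l0} \<and> (\<forall>\<^sub>F w in at l0. f w = g w))"

lemma hol0_vec_iff: "hol0_vec n l0 y \<longleftrightarrow> (\<forall>l<n. hol0 l0 (\<lambda>z. y z $ l))"
  unfolding hol0_vec_def hol0_def ..

lemma analytic_imp_hol0: "f analytic_on {l0} \<Longrightarrow> hol0 l0 f"
  unfolding hol0_def by auto

lemma hol0_cong:
  assumes "\<forall>\<^sub>F w in at l0. f w = g w" "hol0 l0 g"
  shows "hol0 l0 f"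
proof -
  obtain h where "h analytic_on {l0}" "\<forall>\<^sub>F w in at l0. g w = h w"
    using assms(2) unfolding hol0_def by blast
  with assms(1) show ?thesis
    unfolding hol0_def by (intro exI[of _ h]) (auto elim: eventually_elim2)
qed

lemma hol0_binop:
  assumes "hol0 l0 f" "hol0 l0 g"
    and "\<And>f' g'. f' analytic_on {l0} \<Longrightarrow> g' analytic_on {l0} \<Longrightarrow> (\<lambda>z. h (f' z) (g' z)) analytic_on {l0}"
  shows "hol0 l0 (\<lambda>z. h (f z) (g z))"
proof -
  obtain f' g' where "f' analytic_on {l0}" "g' analytic_on {l0}"
    and "\<forall>\<^sub>F w in at l0. f w = f' w" "\<forall>\<^sub>F w in at l0. g w = g' w"
    using assms(1,2) unfolding hol0_def by blast
  then show ?thesis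
    unfolding hol0_def by (intro exI[of _ "\<lambda>z. h (f' z) (g' z)"]) (auto intro: assms(3) elim: eventually_elim2)
qed

lemma hol0_add: "hol0 l0 f \<Longrightarrow> hol0 l0 g \<Longrightarrow> hol0 l0 (\<lambda>z. f z + g z)"
  by (rule hol0_binop) (auto intro: analytic_intros)

lemma hol0_diff: "hol0 l0 f \<Longrightarrow> hol0 l0 g \<Longrightarrow> hol0 l0 (\<lambda>z. f z - g z)"
  by (rule hol0_binop) (auto intro: analytic_intros)

lemma hol0_mult: "hol0 l0 f \<Longrightarrow> hol0 l0 g \<Longrightarrow> hol0 l0 (\<lambda>z. f z * g z)"
  by (rule hol0_binop) (auto intro: analytic_intros)

lemma hol0_sum:
  "finite S \<Longrightarrow> (\<And>k. k \<in> S \<Longrightarrow> hol0 l0 (f k)) \<Longrightarrow> hol0 l0 (\<lambda>z. \<Sum>k\<in>S. f k z)"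
  by (induction S rule: finite_induct) (auto intro: hol0_add analytic_imp_hol0)

lemma hol0_divide_linear:
  assumes "g analytic_on {l0}" "g l0 = 0"
  shows "hol0 l0 (\<lambda>z. g z / (z - l0))"
proof -
  obtain e where e: "e > 0" "g holomorphic_on ball l0 e"
    using assms(1) analytic_at_ball by auto
  define G where "G z = (if z = l0 then deriv g l0 else (g z - g l0) / (z - l0))" for z
  have "G holomorphic_on ball l0 e"
    unfolding G_def by (rule pole_lemma_open) (use e in auto)
  then have "G analytic_on {l0}"
    using e by (intro holomorphic_on_imp_analytic_at) auto
  moreover have "\<forall>\<^sub>F w in at l0. g w / (w - l0) = G w"
    unfolding G_def using assms(2) by (auto simp: eventually_at_filter)
  ultimately show ?thesis unfolding hol0_def by blast
qed

lemma isCont_eq_if_eventually_eq_at: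
  fixes f g :: "complex \<Rightarrow> complex"
  assumes "isCont f l0" "isCont g l0" "\<forall>\<^sub>F w in at l0. f w = g w"
  shows "f l0 = g l0"
proof -
  have "(f \<longlongrightarrow> g l0) (at l0)"
    using assms(2) by (simp add: isCont_def tendsto_cong[OF assms(3)])
  with assms(1) show ?thesis
    unfolding isCont_def by (rule tendsto_unique[OF at_neq_bot])
qed

lemma hol0_power_mult_tendsto_0:
  assumes "hol0 l0 f" "p > 0"
  shows "((\<lambda>z. (z - l0) ^ p * f z) \<longlongrightarrow> 0) (at l0)"
proof -
  obtain g where g: "g analytic_on {l0}" "\<forall>\<^sub>F w in at l0. f w = g w"
    using assms(1) unfolding hol0_def by auto
  have "isCont (\<lambda>z. (z - l0) ^ p * g z) l0"
    using analytic_at_imp_isCont[OF g(1)] by (intro continuous_intros)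
  then have lim: "((\<lambda>z. (z - l0) ^ p * g z) \<longlongrightarrow> 0) (at l0)"
    using assms(2) by (simp add: isCont_def power_0_left)
  have "\<forall>\<^sub>F z in at l0. (z - l0) ^ p * f z = (z - l0) ^ p * g z"
    using g(2) by (auto elim: eventually_mono)
  then show ?thesis by (rule tendsto_cong[THEN iffD2, OF _ lim])
qed

lemma meromorphic_imp_hol0_power_mult:
  assumes "f meromorphic_on \<Omega>" "l0 \<in> \<Omega>"
  shows "\<exists>p. hol0 l0 (\<lambda>z. (z - l0) ^ p * f z)"
proof (cases "\<exists>\<^sub>F w in at l0. f w \<noteq> 0")
  case False
  then have "\<forall>\<^sub>F w in at l0. (w - l0) ^ 0 * f w = 0"
    by (simp add: not_frequently)
  then show ?thesis
    by (intro exI[of _ 0] hol0_cong[OF _ analytic_imp_hol0]) (auto intro: analytic_intros)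
next
  case True
  have "isolated_singularity_at f l0" "not_essential f l0"
    using assms meromorphic_on_altdef by blast+
  then obtain k :: int and g e where g: "0 < e" "g holomorphic_on cball l0 e"
    and f: "\<forall>w\<in>cball l0 e - {l0}. f w = g w * (w - l0) powi k \<and> g w \<noteq> 0"
    using holomorphic_factor_puncture True by blast
  have g_an: "g analytic_on {l0}"
    using g by (intro holomorphic_on_imp_analytic_at[of _ "ball l0 e"])
      (auto intro: holomorphic_on_subset)
  have "\<forall>\<^sub>F w in at l0. w \<in> cball l0 e - {l0}"
    using g(1) by (auto simp: eventually_at dist_commute intro!: exI[of _ e])
  then have "\<forall>\<^sub>F w in at l0. (w - l0) ^ nat (- k) * f w = g w * (w - l0) ^ nat k"
    by eventually_elim (use f in \<open>auto simp: power_int_def power_inverse field_simps\<close>)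
  moreover have "(\<lambda>w. g w * (w - l0) ^ nat k) analytic_on {l0}"
    using g_an by (intro analytic_intros)
  ultimately have "hol0 l0 (\<lambda>w. (w - l0) ^ nat (- k) * f w)"
    by (rule hol0_cong[OF _ analytic_imp_hol0])
  then show ?thesis by blast
qed

lemma power_mult_divide_power:
  fixes w :: complex
  assumes "w \<noteq> 0" "b \<le> a + c"
  shows "w ^ a * (w ^ c / w ^ b) = w ^ (a + c - b)"
  using assms by (simp add: power_diff power_add)

section \<open>Vector functions holomorphic at a point\<close>

definition analytic_vec :: "nat \<Rightarrow> complex \<Rightarrow> (complex \<Rightarrow> complex vec) \<Rightarrow> bool" where
  "analytic_vec n l0 u \<longleftrightarrow> (\<forall>z. u z \<in> carrier_vec n) \<and> (\<forall>l<n. (\<lambda>z. u z $ l) analytic_on {l0})"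

lemma hol_mat_analytic_at:
  assumes "hol_mat a b \<Omega> A" "open \<Omega>" "l0 \<in> \<Omega>" "i < a" "j < b"
  shows "(\<lambda>z. A z $$ (i,j)) analytic_on {l0}"
  using assms unfolding hol_mat_def by (meson holomorphic_on_imp_analytic_at)

lemma hol_mat_imp_hol0_mat:
  assumes "hol_mat n n \<Omega> A" "open \<Omega>" "l0 \<in> \<Omega>"
  shows "hol0_mat n l0 A"
  using assms hol_mat_analytic_at unfolding hol0_mat_def hol_mat_def by blast

lemma det_analytic_at:
  assumes "hol0_mat k l0 A"
  shows "(\<lambda>z. det (A z)) analytic_on {l0}"
proof -
  have A: "A z \<in> carrier_mat k k" for z
    using assms unfolding hol0_mat_def by blast
  have "(\<lambda>z. \<Sum>p\<in>{p. p permutes {0..<k}}. signof p * (\<Prod>i=0..<k. A z $$ (i, p i))) analytic_on {l0}"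
  proof (intro analytic_intros)
    fix p i assume "p \<in> {p. p permutes {0..<k}}" "i \<in> {0..<k}"
    then show "(\<lambda>z. A z $$ (i, p i)) analytic_on {l0}"
      using assms permutes_in_image[of p "{0..<k}" i] unfolding hol0_mat_def by auto
  qed
  then show ?thesis using det_def'[OF A] by simp
qed

lemma adj_mat_analytic_at:
  assumes "hol0_mat k l0 A"
  shows "hol0_mat k l0 (\<lambda>z. adj_mat (A z))"
proof -
  have A: "A z \<in> carrier_mat k k" for z
    using assms unfolding hol0_mat_def by blast
  have "(\<lambda>z. adj_mat (A z) $$ (i,j)) analytic_on {l0}" if ij: "i < k" "j < k" for i j
  proof -
    have "hol0_mat (k - 1) l0 (\<lambda>z. mat_delete (A z) j i)"
      unfolding hol0_mat_def
    proof (intro conjI allI impI)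
      show "mat_delete (A z) j i \<in> carrier_mat (k - 1) (k - 1)" for z
        using mat_delete_carrier[OF A] .
      fix a b assume ab: "a < k - 1" "b < k - 1"
      then have "(\<lambda>z. A z $$ (if a < j then a else Suc a, if b < i then b else Suc b)) analytic_on {l0}"
        using assms unfolding hol0_mat_def by auto
      moreover have "mat_delete (A z) j i $$ (a, b) = A z $$ (if a < j then a else Suc a, if b < i then b else Suc b)" for z
        using A[of z] ab by (simp add: mat_delete_def)
      ultimately show "(\<lambda>z. mat_delete (A z) j i $$ (a, b)) analytic_on {l0}"
        by simp
    qed
    then have "(\<lambda>z. (-1)^(j+i) * det (mat_delete (A z) j i)) analytic_on {l0}"
      by (intro analytic_on_mult analytic_on_const det_analytic_at)
    moreover have "adj_mat (A z) $$ (i,j) = (-1)^(j+i) * det (mat_delete (A z) j i)" for z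
      using A[of z] ij by (simp add: adj_mat_def cofactor_def)
    ultimately show ?thesis by simp
  qed
  then show ?thesis
    using adj_mat(1)[OF A] unfolding hol0_mat_def by blast
qed

lemma analytic_vec_mult_mat_vec:
  assumes A: "\<And>z. A z \<in> carrier_mat a b" "\<And>i j. i < a \<Longrightarrow> j < b \<Longrightarrow> (\<lambda>z. A z $$ (i,j)) analytic_on {l0}"
    and x: "analytic_vec b l0 x"
  shows "analytic_vec a l0 (\<lambda>z. A z *\<^sub>v x z)"
proof -
  have xc: "x z \<in> carrier_vec b" for z
    using x unfolding analytic_vec_def by blast
  have "(\<lambda>z. (A z *\<^sub>v x z) $ l) analytic_on {l0}" if l: "l < a" for l
  proof -
    have "(\<lambda>z. x z $ j) analytic_on {l0}" if "j < b" for j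
      using x that unfolding analytic_vec_def by blast
    then have "(\<lambda>z. \<Sum>j<b. A z $$ (l,j) * x z $ j) analytic_on {l0}"
      using A(2)[OF l] by (intro analytic_on_sum analytic_on_mult) auto
    moreover have "(A z *\<^sub>v x z) $ l = (\<Sum>j<b. A z $$ (l,j) * x z $ j)" for z
      using A(1) xc l by (rule mult_mat_vec_index)
    ultimately show ?thesis by simp
  qed
  moreover have "A z *\<^sub>v x z \<in> carrier_vec a" for z
    using A(1) xc by (rule mult_mat_vec_carrier)
  ultimately show ?thesis
    unfolding analytic_vec_def by blast
qed

lemma analytic_vec_smult:
  assumes "f analytic_on {l0}" "analytic_vec n l0 g"
  shows "analytic_vec n l0 (\<lambda>z. f z \<cdot>\<^sub>v g z)"
proof -
  have "(\<lambda>z. (f z \<cdot>\<^sub>v g z) $ l) analytic_on {l0}" if "l < n" for l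
  proof -
    have "(\<lambda>z. f z * g z $ l) analytic_on {l0}"
      using assms that unfolding analytic_vec_def by (intro analytic_intros) auto
    moreover have "(f z \<cdot>\<^sub>v g z) $ l = f z * g z $ l" for z
    proof -
      have "g z \<in> carrier_vec n"
        using assms(2) unfolding analytic_vec_def by blast
      then show ?thesis using that by simp
    qed
    ultimately show ?thesis by simp
  qed
  then show ?thesis
    using assms(2) unfolding analytic_vec_def by simp
qed

lemma analytic_vec_diff:
  assumes f: "analytic_vec n l0 f" and g: "analytic_vec n l0 g"
  shows "analytic_vec n l0 (\<lambda>z. f z - g z)"
proof -
  have fc: "f z \<in> carrier_vec n" and gc: "g z \<in> carrier_vec n" for z
    using f g unfolding analytic_vec_def by auto
  have "(\<lambda>z. (f z - g z) $ l) analytic_on {l0}" if "l < n" for l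
  proof -
    have "(\<lambda>z. f z $ l - g z $ l) analytic_on {l0}"
      using f g that unfolding analytic_vec_def by (intro analytic_on_diff) auto
    moreover have "(f z - g z) $ l = f z $ l - g z $ l" for z
      using fc[of z] gc[of z] that by simp
    ultimately show ?thesis by simp
  qed
  then show ?thesis
    unfolding analytic_vec_def using fc gc by auto
qed

lemma hol0_vec_imp_analytic_vec:
  assumes "hol0_vec n l0 f" "\<And>z. f z \<in> carrier_vec n"
  obtains g where "analytic_vec n l0 g" "\<forall>\<^sub>F z in at l0. f z = g z"
proof -
  have "\<forall>l\<in>{..<n}. \<exists>g. g analytic_on {l0} \<and> (\<forall>\<^sub>F z in at l0. f z $ l = g z)"
    using assms(1) unfolding hol0_vec_def by blast
  then obtain G where G: "\<And>l. l < n \<Longrightarrow> G l analytic_on {l0} \<and> (\<forall>\<^sub>F z in at l0. f z $ l = G l z)"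
    by (metis bchoice lessThan_iff)
  have "\<forall>\<^sub>F z in at l0. f z = vec n (\<lambda>l. G l z)"
    using G by (intro eventually_vec_eqI[OF assms(2)]) auto
  moreover have "analytic_vec n l0 (\<lambda>z. vec n (\<lambda>l. G l z))"
    using G unfolding analytic_vec_def by auto
  ultimately show ?thesis using that by blast
qed

lemma hol0_vecI:
  assumes "analytic_vec n l0 g" "\<forall>\<^sub>F z in at l0. f z = g z"
  shows "hol0_vec n l0 f"
  unfolding hol0_vec_def
proof (intro allI impI)
  fix l assume "l < n"
  then have "(\<lambda>z. g z $ l) analytic_on {l0}"
    using assms(1) unfolding analytic_vec_def by blast
  moreover have "\<forall>\<^sub>F z in at l0. f z $ l = g z $ l"
    using assms(2) by (auto elim: eventually_mono)
  ultimately show "\<exists>h. h analytic_on {l0} \<and> (\<forall>\<^sub>F z in at l0. f z $ l = h z)"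
    by blast
qed

lemma hol0_vec_diff:
  assumes "hol0_vec n l0 f" "hol0_vec n l0 g" "\<And>z. f z \<in> carrier_vec n" "\<And>z. g z \<in> carrier_vec n"
  shows "hol0_vec n l0 (\<lambda>z. f z - g z)"
proof -
  have "(f z - g z) $ l = f z $ l - g z $ l" if "l < n" for z l
    using assms(3,4)[of z] that by simp
  then show ?thesis
    using assms(1,2) unfolding hol0_vec_iff by (simp add: hol0_diff)
qed

section \<open>Order of vanishing\<close>

text \<open>\<open>f = \<chi>\<^sub>0^p g\<close> near \<open>l0\<close> with \<open>g\<close> holomorphic at \<open>l0\<close>; unlike in
  \<open>zero_order_vec\<close>, \<open>g(l0) = 0\<close> is allowed, so \<open>p\<close> is only a lower bound for the order.\<close>
definition vanishes_to_order :: "nat \<Rightarrow> complex \<Rightarrow> nat \<Rightarrow> (complex \<Rightarrow> complex vec) \<Rightarrow> bool" where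
  "vanishes_to_order n l0 p f \<longleftrightarrow>
     (\<exists>g. analytic_vec n l0 g \<and> (\<forall>\<^sub>F z in at l0. f z = (z - l0) ^ p \<cdot>\<^sub>v g z))"

lemma vanishes_to_order_mono:
  assumes "vanishes_to_order n l0 p f" "q \<le> p"
  shows "vanishes_to_order n l0 q f"
proof -
  obtain g where g: "analytic_vec n l0 g" and f: "\<forall>\<^sub>F z in at l0. f z = (z - l0) ^ p \<cdot>\<^sub>v g z"
    using assms(1) unfolding vanishes_to_order_def by blast
  have split: "(z - l0) ^ p \<cdot>\<^sub>v g z = (z - l0) ^ q \<cdot>\<^sub>v ((z - l0) ^ (p - q) \<cdot>\<^sub>v g z)" for z
    using assms(2) by (simp add: smult_smult_assoc flip: power_add)
  moreover have "analytic_vec n l0 (\<lambda>z. (z - l0) ^ (p - q) \<cdot>\<^sub>v g z)"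
    by (rule analytic_vec_smult[OF _ g]) (intro analytic_intros)
  moreover have "\<forall>\<^sub>F z in at l0. f z = (z - l0) ^ q \<cdot>\<^sub>v ((z - l0) ^ (p - q) \<cdot>\<^sub>v g z)"
    using f by eventually_elim (simp only: split)
  ultimately show ?thesis
    unfolding vanishes_to_order_def by blast
qed

lemma analytic_zero_factor:
  fixes h :: "complex \<Rightarrow> complex"
  assumes "h analytic_on {l0}"
  shows "(\<forall>\<^sub>F z in nhds l0. h z = 0) \<or>
    (\<exists>k g. g analytic_on {l0} \<and> g l0 \<noteq> 0 \<and> (\<forall>\<^sub>F z in nhds l0. h z = (z - l0) ^ k * g z))"
proof -
  obtain e where e: "e > 0" "h holomorphic_on ball l0 e"
    using assms analytic_at_ball by blast
  show ?thesis
  proof (cases "\<forall>w\<in>ball l0 e. h w = 0")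
    case True
    have "\<forall>\<^sub>F z in nhds l0. z \<in> ball l0 e"
      using e(1) by (intro eventually_nhds_in_open) auto
    then show ?thesis
      using True by (auto elim: eventually_mono)
  next
    case False
    then have "\<exists>w\<in>ball l0 e. h w \<noteq> 0" by blast
    from zorder_exist_zero[OF e(2) open_ball connected_ball _ this, THEN conjunct2] e(1)
    have "\<exists>d>0. cball l0 d \<subseteq> ball l0 e \<and> zor_poly h l0 holomorphic_on cball l0 d \<and>
      (\<forall>w\<in>cball l0 d. h w = zor_poly h l0 w * (w - l0) ^ nat (zorder h l0) \<and> zor_poly h l0 w \<noteq> 0)"
      by simp
    then obtain d where d: "d > 0" "cball l0 d \<subseteq> ball l0 e" "zor_poly h l0 holomorphic_on cball l0 d"
      "\<forall>w\<in>cball l0 d. h w = zor_poly h l0 w * (w - l0) ^ nat (zorder h l0) \<and> zor_poly h l0 w \<noteq> 0"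
      by blast
    have "zor_poly h l0 analytic_on {l0}"
      using d by (intro holomorphic_on_imp_analytic_at[of _ "ball l0 d"])
        (auto intro: holomorphic_on_subset)
    moreover have "\<forall>\<^sub>F z in nhds l0. z \<in> ball l0 d"
      using d(1) by (intro eventually_nhds_in_open) auto
    then have "\<forall>\<^sub>F z in nhds l0. h z = (z - l0) ^ nat (zorder h l0) * zor_poly h l0 z"
      by eventually_elim (use d(4) in \<open>auto simp: mult.commute\<close>)
    moreover have "zor_poly h l0 l0 \<noteq> 0"
      using d(1,4) by auto
    ultimately show ?thesis by blast
  qed
qed

lemma power_factor_exponent_le:
  assumes g: "analytic_vec n l0 g" "g l0 \<noteq> 0\<^sub>v n" and g': "analytic_vec n l0 g'"
    and f: "\<forall>\<^sub>F z in at l0. f z = (z - l0) ^ k \<cdot>\<^sub>v g z"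
    and f': "\<forall>\<^sub>F z in at l0. f z = (z - l0) ^ k' \<cdot>\<^sub>v g' z"
  shows "k' \<le> k"
proof (rule ccontr)
  assume "\<not> k' \<le> k"
  then have k: "k' = k + (k' - k)" "k' - k > 0" by auto
  have gc: "g z \<in> carrier_vec n" "g' z \<in> carrier_vec n" for z
    using g g' unfolding analytic_vec_def by auto
  obtain i where i: "i < n" "g l0 $ i \<noteq> 0"
    using g(2) gc(1)[of l0] by (metis eq_vecI carrier_vecD index_zero_vec)
  have "\<forall>\<^sub>F z in at l0. z \<noteq> l0"
    by (simp add: eventually_at_filter)
  with f f' have "\<forall>\<^sub>F z in at l0. g z $ i = (z - l0) ^ (k' - k) * g' z $ i"
  proof eventually_elim
    case (elim z)
    have "(z - l0) ^ k * g z $ i = (z - l0) ^ k' * g' z $ i"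
      using arg_cong[OF trans[OF sym[OF elim(1)] elim(2)], of "\<lambda>v. v $ i"] gc[of z] i(1) by simp
    also have "\<dots> = (z - l0) ^ k * ((z - l0) ^ (k' - k) * g' z $ i)"
      by (subst k(1)) (simp only: power_add mult.assoc)
    finally show ?case using elim(3) by simp
  qed
  moreover have "(\<lambda>z. g z $ i) analytic_on {l0}" "(\<lambda>z. g' z $ i) analytic_on {l0}"
    using g(1) g' i(1) unfolding analytic_vec_def by auto
  then have "isCont (\<lambda>z. g z $ i) l0" "isCont (\<lambda>z. (z - l0) ^ (k' - k) * g' z $ i) l0"
    by (auto intro!: analytic_at_imp_isCont analytic_intros)
  ultimately have "g l0 $ i = (l0 - l0) ^ (k' - k) * g' l0 $ i"
    by (intro isCont_eq_if_eventually_eq_at[where f = "\<lambda>z. g z $ i"])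
  then show False using i(2) k(2) by simp
qed

lemma zero_order_vec_eqI:
  assumes "analytic_vec n l0 g" "g l0 \<noteq> 0\<^sub>v n" "\<forall>\<^sub>F z in nhds l0. f z = (z - l0) ^ k \<cdot>\<^sub>v g z"
  shows "zero_order_vec n f l0 = k"
  unfolding zero_order_vec_def
proof (rule the_equality)
  show "\<exists>g. (\<forall>z. g z \<in> carrier_vec n) \<and> (\<forall>i<n. (\<lambda>z. g z $ i) analytic_on {l0}) \<and>
      g l0 \<noteq> 0\<^sub>v n \<and> (\<forall>\<^sub>F z in nhds l0. f z = (z - l0) ^ k \<cdot>\<^sub>v g z)"
    using assms unfolding analytic_vec_def by blast
next
  fix k' assume "\<exists>g'. (\<forall>z. g' z \<in> carrier_vec n) \<and> (\<forall>i<n. (\<lambda>z. g' z $ i) analytic_on {l0}) \<and>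
      g' l0 \<noteq> 0\<^sub>v n \<and> (\<forall>\<^sub>F z in nhds l0. f z = (z - l0) ^ k' \<cdot>\<^sub>v g' z)"
  then obtain g' where "analytic_vec n l0 g'" "g' l0 \<noteq> 0\<^sub>v n"
    "\<forall>\<^sub>F z in nhds l0. f z = (z - l0) ^ k' \<cdot>\<^sub>v g' z"
    unfolding analytic_vec_def by blast
  then have "\<forall>\<^sub>F z in at l0. f z = (z - l0) ^ k' \<cdot>\<^sub>v g' z" "analytic_vec n l0 g'" "g' l0 \<noteq> 0\<^sub>v n"
    by (simp_all add: eventually_nhds_conv_at)
  moreover have "\<forall>\<^sub>F z in at l0. f z = (z - l0) ^ k \<cdot>\<^sub>v g z"
    using assms(3) by (simp add: eventually_nhds_conv_at)
  ultimately show "k' = k"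
    using power_factor_exponent_le[OF assms(1,2)] power_factor_exponent_le[of n l0 g'] assms(1)
    by (meson le_antisym)
qed

lemma analytic_vec_factor:
  assumes f: "analytic_vec n l0 f"
  shows "(\<forall>\<^sub>F z in nhds l0. f z = 0\<^sub>v n) \<or>
    (\<exists>k g. analytic_vec n l0 g \<and> g l0 \<noteq> 0\<^sub>v n \<and> (\<forall>\<^sub>F z in nhds l0. f z = (z - l0) ^ k \<cdot>\<^sub>v g z))"
proof -
  have fc: "f z \<in> carrier_vec n" for z
    using f unfolding analytic_vec_def by blast
  define NZ where "NZ = {i. i < n \<and> \<not> (\<forall>\<^sub>F z in nhds l0. f z $ i = 0)}"
  have "\<forall>i\<in>NZ. \<exists>k g. g analytic_on {l0} \<and> g l0 \<noteq> 0 \<and> (\<forall>\<^sub>F z in nhds l0. f z $ i = (z - l0) ^ k * g z)"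
    using f analytic_zero_factor unfolding NZ_def analytic_vec_def by blast
  then obtain K G where KG: "\<And>i. i \<in> NZ \<Longrightarrow> G i analytic_on {l0} \<and> G i l0 \<noteq> 0 \<and>
      (\<forall>\<^sub>F z in nhds l0. f z $ i = (z - l0) ^ K i * G i z)"
    by metis
  have zero: "\<forall>\<^sub>F z in nhds l0. f z $ i = 0" if "i < n" "i \<notin> NZ" for i
    using that unfolding NZ_def by blast
  show ?thesis
  proof (cases "NZ = {}")
    case True
    have "\<forall>\<^sub>F z in nhds l0. f z = 0\<^sub>v n"
      using zero True by (intro eventually_vec_eqI[OF fc]) (auto elim: eventually_mono)
    then show ?thesis by blast
  next
    case False
    have "finite NZ" unfolding NZ_def by auto
    define k where "k = Min (K ` NZ)"
    have "k \<in> K ` NZ"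
      unfolding k_def using \<open>finite NZ\<close> False by (intro Min_in) auto
    then obtain i0 where i0: "i0 \<in> NZ" "K i0 = k"
      by blast
    have k_le: "k \<le> K i" if "i \<in> NZ" for i
      unfolding k_def using \<open>finite NZ\<close> that by simp
    define g where "g z = vec n (\<lambda>i. if i \<in> NZ then (z - l0) ^ (K i - k) * G i z else 0)" for z
    have "(\<lambda>z. g z $ i) analytic_on {l0}" if "i < n" for i
    proof (cases "i \<in> NZ")
      case True
      have "(\<lambda>z. (z - l0) ^ (K i - k) * G i z) analytic_on {l0}"
        using KG[OF True] by (intro analytic_on_mult analytic_on_power analytic_on_diff analytic_on_ident analytic_on_const) auto
      then show ?thesis using that True unfolding g_def by simp
    next
      case False
      then show ?thesis using that unfolding g_def by simp
    qed
    then have "analytic_vec n l0 g"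
      unfolding analytic_vec_def g_def by simp
    moreover have "g l0 \<noteq> 0\<^sub>v n"
    proof
      assume "g l0 = 0\<^sub>v n"
      then have "g l0 $ i0 = 0" using i0(1) unfolding NZ_def by auto
      then show False using i0 KG[of i0] unfolding NZ_def g_def by auto
    qed
    moreover have "\<forall>\<^sub>F z in nhds l0. f z $ i = (z - l0) ^ k * g z $ i" if "i < n" for i
    proof (cases "i \<in> NZ")
      case True
      have "(z - l0) ^ K i = (z - l0) ^ k * (z - l0) ^ (K i - k)" for z
        using k_le[OF True] by (simp flip: power_add)
      then show ?thesis
        using KG[OF True] that True unfolding g_def by (auto elim: eventually_mono)
    next
      case False
      then show ?thesis
        using zero[OF that False] that unfolding g_def by (auto elim: eventually_mono)
    qed
    then have "\<forall>\<^sub>F z in nhds l0. f z = (z - l0) ^ k \<cdot>\<^sub>v g z"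
      by (intro eventually_vec_eqI[OF fc]) (auto simp: g_def elim: eventually_mono)
    ultimately show ?thesis by blast
  qed
qed

lemma vanishes_to_zero_order_vec:
  assumes "analytic_vec n l0 f"
  shows "vanishes_to_order n l0 (zero_order_vec n f l0) f"
  using analytic_vec_factor[OF assms]
proof
  assume "\<forall>\<^sub>F z in nhds l0. f z = 0\<^sub>v n"
  moreover have "c \<cdot>\<^sub>v 0\<^sub>v n = 0\<^sub>v n" for c :: complex
    by (intro eq_vecI) auto
  ultimately have "\<forall>\<^sub>F z in at l0. f z = (z - l0) ^ zero_order_vec n f l0 \<cdot>\<^sub>v 0\<^sub>v n"
    by (simp add: eventually_nhds_conv_at)
  moreover have "analytic_vec n l0 (\<lambda>z. 0\<^sub>v n)"
    unfolding analytic_vec_def by auto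
  ultimately show ?thesis
    unfolding vanishes_to_order_def by blast
next
  assume "\<exists>k g. analytic_vec n l0 g \<and> g l0 \<noteq> 0\<^sub>v n \<and> (\<forall>\<^sub>F z in nhds l0. f z = (z - l0) ^ k \<cdot>\<^sub>v g z)"
  then obtain k g where g: "analytic_vec n l0 g" "g l0 \<noteq> 0\<^sub>v n"
    and f: "\<forall>\<^sub>F z in nhds l0. f z = (z - l0) ^ k \<cdot>\<^sub>v g z"
    by blast
  then show ?thesis
    using zero_order_vec_eqI[OF g f] unfolding vanishes_to_order_def
    by (auto simp: eventually_nhds_conv_at)
qed

section \<open>Linear combinations of vector functions\<close>

lemma lin_comb_carrier [simp]: "lin_comb n K c v z \<in> carrier_vec n"
  by (simp add: lin_comb_def)

lemma dim_lin_comb [simp]: "dim_vec (lin_comb n K c v z) = n"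
  by (simp add: lin_comb_def)

lemma lin_comb_index: "l < n \<Longrightarrow> lin_comb n K c v z $ l = (\<Sum>k\<in>K. c k * v k z $ l)"
  by (simp add: lin_comb_def)

lemma lin_comb_add:
  "lin_comb n K (\<lambda>k. c k + d k) v z = lin_comb n K c v z + lin_comb n K d v z"
  by (rule eq_vecI) (simp_all add: lin_comb_def distrib_right sum.distrib)

lemma hol0_vec_mult_lin_comb:
  assumes "finite K" "\<And>z. A z \<in> carrier_mat n n" "\<And>k z. k \<in> K \<Longrightarrow> v k z \<in> carrier_vec n"
    and "\<And>k. k \<in> K \<Longrightarrow> hol0_vec n l0 (\<lambda>z. A z *\<^sub>v v k z)"
  shows "hol0_vec n l0 (\<lambda>z. A z *\<^sub>v lin_comb n K c v z)"
  unfolding hol0_vec_iff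
proof (intro allI impI)
  fix l assume l: "l < n"
  have "(A z *\<^sub>v lin_comb n K c v z) $ l = (\<Sum>k\<in>K. c k * (A z *\<^sub>v v k z) $ l)" for z
  proof -
    have "(A z *\<^sub>v lin_comb n K c v z) $ l = (\<Sum>q<n. A z $$ (l,q) * (\<Sum>k\<in>K. c k * v k z $ q))"
      by (simp add: mult_mat_vec_index[OF assms(2) lin_comb_carrier l] lin_comb_index)
    also have "\<dots> = (\<Sum>k\<in>K. c k * (\<Sum>q<n. A z $$ (l,q) * v k z $ q))"
      by (simp add: sum_distrib_left mult_ac sum.swap[of _ K])
    also have "\<dots> = (\<Sum>k\<in>K. c k * (A z *\<^sub>v v k z) $ l)"
      by (intro sum.cong refl) (simp add: mult_mat_vec_index[OF assms(2) assms(3) l])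
    finally show ?thesis .
  qed
  moreover have "hol0 l0 (\<lambda>z. \<Sum>k\<in>K. c k * (A z *\<^sub>v v k z) $ l)"
    using assms(4) l unfolding hol0_vec_iff
    by (intro hol0_sum[OF assms(1)] hol0_mult[OF analytic_imp_hol0]) auto
  ultimately show "hol0 l0 (\<lambda>z. (A z *\<^sub>v lin_comb n K c v z) $ l)"
    by simp
qed

lemma mero_vec_imp_hol0_power_smult:
  assumes y: "mero_vec n \<Omega> y" and "l0 \<in> \<Omega>"
  shows "\<exists>p. hol0_vec n l0 (\<lambda>z. (z - l0) ^ p \<cdot>\<^sub>v y z)"
proof -
  have "\<forall>l\<in>{..<n}. \<exists>p. hol0 l0 (\<lambda>z. (z - l0) ^ p * y z $ l)"
    using y meromorphic_imp_hol0_power_mult[OF _ \<open>l0 \<in> \<Omega>\<close>] unfolding mero_vec_def by blast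
  then obtain pp where pp: "\<And>l. l < n \<Longrightarrow> hol0 l0 (\<lambda>z. (z - l0) ^ pp l * y z $ l)"
    by (metis bchoice lessThan_iff)
  define p where "p = (\<Sum>l<n. pp l)"
  have "hol0 l0 (\<lambda>z. ((z - l0) ^ p \<cdot>\<^sub>v y z) $ l)" if l: "l < n" for l
  proof -
    have "pp l \<le> p"
      unfolding p_def using l by (intro member_le_sum) auto
    then have pow: "(z - l0) ^ p = (z - l0) ^ (p - pp l) * (z - l0) ^ pp l" for z
      by (simp flip: power_add)
    have "((z - l0) ^ p \<cdot>\<^sub>v y z) $ l = (z - l0) ^ (p - pp l) * ((z - l0) ^ pp l * y z $ l)" for z
    proof -
      have "y z \<in> carrier_vec n"
        using y unfolding mero_vec_def by blast
      then show ?thesis using l by (simp add: pow mult.assoc)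
    qed
    moreover have "hol0 l0 (\<lambda>z. (z - l0) ^ (p - pp l) * ((z - l0) ^ pp l * y z $ l))"
      by (intro hol0_mult[OF analytic_imp_hol0 pp[OF l]] analytic_intros)
    ultimately show ?thesis by simp
  qed
  then show ?thesis
    unfolding hol0_vec_iff by blast
qed

section \<open>The local Smith form\<close>

locale local_smith_form =
  fixes n :: nat and l0 :: complex and T UL UR :: "complex \<Rightarrow> complex mat" and m :: "nat \<Rightarrow> nat"
  assumes T: "hol0_mat n l0 T" and UL: "hol0_mat n l0 UL" and UR: "hol0_mat n l0 UR"
    and det_UL: "det (UL l0) \<noteq> 0" and det_UR: "det (UR l0) \<noteq> 0"
    and smith: "\<forall>\<^sub>F z in nhds l0. UL z * T z * UR z = mat_diag n (\<lambda>i. (z - l0) ^ m i)"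
    and m_antimono: "\<And>i j. i \<le> j \<Longrightarrow> j < n \<Longrightarrow> m j \<le> m i"
begin

lemma T_carrier: "T z \<in> carrier_mat n n"
  using T unfolding hol0_mat_def by blast

lemma UL_carrier: "UL z \<in> carrier_mat n n"
  using UL unfolding hol0_mat_def by blast

lemma UR_carrier: "UR z \<in> carrier_mat n n"
  using UR unfolding hol0_mat_def by blast

lemma UL_l0_inj: "v \<in> carrier_vec n \<Longrightarrow> UL l0 *\<^sub>v v = 0\<^sub>v n \<Longrightarrow> v = 0\<^sub>v n"
  using det_0_iff_vec_prod_zero[OF UL_carrier] det_UL by blast

lemma UR_l0_inj: "v \<in> carrier_vec n \<Longrightarrow> UR l0 *\<^sub>v v = 0\<^sub>v n \<Longrightarrow> v = 0\<^sub>v n"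
  using det_0_iff_vec_prod_zero[OF UR_carrier] det_UR by blast

lemma adj_UR_l0_inj:
  assumes v: "v \<in> carrier_vec n" and adj_v: "adj_mat (UR l0) *\<^sub>v v = 0\<^sub>v n"
  shows "v = 0\<^sub>v n"
proof (rule eq_vecI)
  have "det (UR l0) \<cdot>\<^sub>v v = UR l0 *\<^sub>v 0\<^sub>v n"
    unfolding adj_v[symmetric] by (rule mult_adj_mat_vec[OF UR_carrier v, symmetric])
  also have "\<dots> = 0\<^sub>v n"
    using UR_carrier[of l0] by (intro eq_vecI) auto
  finally have "det (UR l0) \<cdot>\<^sub>v v = 0\<^sub>v n" .
  fix l assume "l < dim_vec (0\<^sub>v n :: complex vec)"
  then have "det (UR l0) * v $ l = 0"
    using arg_cong[OF \<open>det (UR l0) \<cdot>\<^sub>v v = 0\<^sub>v n\<close>, of "\<lambda>x. x $ l"] v by simp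
  then show "v $ l = 0\<^sub>v n $ l"
    using det_UR \<open>l < _\<close> by simp
qed (use v in simp)

lemma diag_adj_UR_mult_vec:
  assumes smith_z: "UL z * T z * UR z = mat_diag n (\<lambda>i. (z - l0) ^ m i)"
    and u: "u \<in> carrier_vec n" and g: "g \<in> carrier_vec n" and Tu: "T z *\<^sub>v u = (z - l0) ^ p \<cdot>\<^sub>v g"
    and l: "l < n"
  shows "(z - l0) ^ m l * (adj_mat (UR z) *\<^sub>v u) $ l = (z - l0) ^ p * det (UR z) * (UL z *\<^sub>v g) $ l"
proof -
  define w where "w = adj_mat (UR z) *\<^sub>v u"
  have wc: "w \<in> carrier_vec n"
    unfolding w_def by (rule mult_mat_vec_carrier[OF adj_mat(1)[OF UR_carrier] u])
  have "mat_diag n (\<lambda>i. (z - l0) ^ m i) *\<^sub>v w = UL z *\<^sub>v (T z *\<^sub>v (UR z *\<^sub>v w))"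
    unfolding smith_z[symmetric]
    using assoc_mult_mat_vec[OF mult_carrier_mat[OF UL_carrier T_carrier] UR_carrier wc]
      assoc_mult_mat_vec[OF UL_carrier T_carrier mult_mat_vec_carrier[OF UR_carrier wc]] by simp
  also have "\<dots> = ((z - l0) ^ p * det (UR z)) \<cdot>\<^sub>v (UL z *\<^sub>v g)"
    unfolding w_def mult_adj_mat_vec[OF UR_carrier u] mult_mat_vec[OF T_carrier u] Tu
    using mult_mat_vec[OF UL_carrier g] by (simp add: smult_smult_assoc mult.commute)
  finally have "(mat_diag n (\<lambda>i. (z - l0) ^ m i) *\<^sub>v w) $ l
      = (((z - l0) ^ p * det (UR z)) \<cdot>\<^sub>v (UL z *\<^sub>v g)) $ l"
    by simp
  then show ?thesis
    using UL_carrier[of z] l unfolding w_def[symmetric] by (simp add: mat_diag_mult_vec_index[OF wc l])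
qed

text \<open>By \<open>diag_adj_UR_mult_vec\<close>, \<open>(adj(U\<^sub>R) u)\<^sub>l\<close> is \<open>\<chi>\<^sub>0^{p - m\<^sub>l}\<close> times
  a function holomorphic at \<open>l0\<close>.\<close>
lemma adj_UR_mult_vec_eq_0:
  assumes u: "analytic_vec n l0 u" and Tu: "vanishes_to_order n l0 p (\<lambda>z. T z *\<^sub>v u z)"
    and l: "l < n" "m l < p"
  shows "(adj_mat (UR l0) *\<^sub>v u l0) $ l = 0"
proof -
  obtain g where g: "analytic_vec n l0 g" and Tug: "\<forall>\<^sub>F z in at l0. T z *\<^sub>v u z = (z - l0) ^ p \<cdot>\<^sub>v g z"
    using Tu unfolding vanishes_to_order_def by blast
  define w where "w z = adj_mat (UR z) *\<^sub>v u z" for z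
  have uc: "u z \<in> carrier_vec n" and gc: "g z \<in> carrier_vec n" for z
    using u g unfolding analytic_vec_def by auto
  have w_an: "(\<lambda>z. w z $ l) analytic_on {l0}"
    using analytic_vec_mult_mat_vec[of "\<lambda>z. adj_mat (UR z)", OF _ _ u] adj_mat_analytic_at[OF UR] l
    unfolding w_def analytic_vec_def hol0_mat_def by blast
  have ULg_an: "(\<lambda>z. (UL z *\<^sub>v g z) $ l) analytic_on {l0}"
    using analytic_vec_mult_mat_vec[of UL, OF _ _ g] UL l unfolding analytic_vec_def hol0_mat_def by blast
  have "\<forall>\<^sub>F z in at l0. z \<noteq> l0"
    by (simp add: eventually_at_filter)
  moreover have "\<forall>\<^sub>F z in at l0. UL z * T z * UR z = mat_diag n (\<lambda>i. (z - l0) ^ m i)"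
    using smith by (simp add: eventually_nhds_conv_at)
  ultimately have "\<forall>\<^sub>F z in at l0. w z $ l = (z - l0) ^ (p - m l) * (det (UR z) * (UL z *\<^sub>v g z) $ l)"
    using Tug
  proof eventually_elim
    case (elim z)
    have "(z - l0) ^ m l * w z $ l = (z - l0) ^ p * det (UR z) * (UL z *\<^sub>v g z) $ l"
      unfolding w_def by (rule diag_adj_UR_mult_vec[OF elim(2) uc gc elim(3) l(1)])
    moreover have "(z - l0) ^ p = (z - l0) ^ m l * (z - l0) ^ (p - m l)"
      using l(2) by (simp flip: power_add)
    ultimately show ?case
      using elim(1) by (simp add: mult_ac)
  qed
  moreover have "isCont (\<lambda>z. (z - l0) ^ (p - m l) * (det (UR z) * (UL z *\<^sub>v g z) $ l)) l0"
    using det_analytic_at[OF UR] ULg_an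
    by (intro analytic_at_imp_isCont analytic_on_mult analytic_on_power analytic_on_diff analytic_on_ident analytic_on_const)
  ultimately have "w l0 $ l = (l0 - l0) ^ (p - m l) * (det (UR l0) * (UL l0 *\<^sub>v g l0) $ l)"
    using analytic_at_imp_isCont[OF w_an] by (intro isCont_eq_if_eventually_eq_at[where f = "\<lambda>z. w z $ l"])
  then show ?thesis
    using l(2) by (simp add: w_def)
qed

text \<open>Since \<open>m\<close> is antitone, the multiplicities \<open>\<ge> p\<close> are exactly
  \<open>m 0, \<dots>, m (num_mult_ge p - 1)\<close>.\<close>
definition num_mult_ge :: "nat \<Rightarrow> nat" where
  "num_mult_ge p = (LEAST l. l = n \<or> (l < n \<and> m l < p))"

lemma num_mult_ge_le: "num_mult_ge p \<le> n"
  unfolding num_mult_ge_def by (rule Least_le) simp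

lemma less_num_mult_ge_iff:
  assumes "l < n"
  shows "l < num_mult_ge p \<longleftrightarrow> p \<le> m l"
proof
  assume "l < num_mult_ge p"
  then show "p \<le> m l"
    using not_less_Least[of l "\<lambda>l. l = n \<or> (l < n \<and> m l < p)"] assms
    unfolding num_mult_ge_def by auto
next
  assume p: "p \<le> m l"
  show "l < num_mult_ge p"
  proof (rule ccontr)
    assume "\<not> l < num_mult_ge p"
    then have "m l \<le> m (num_mult_ge p)"
      using assms m_antimono[of "num_mult_ge p" l] by simp
    moreover have "num_mult_ge p = n \<or> (num_mult_ge p < n \<and> m (num_mult_ge p) < p)"
      unfolding num_mult_ge_def by (rule LeastI[of _ n]) simp
    ultimately show False
      using assms p \<open>\<not> l < num_mult_ge p\<close> by linarith
  qed
qed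

lemma num_mult_ge_antimono:
  assumes "q \<le> p"
  shows "num_mult_ge p \<le> num_mult_ge q"
proof (rule ccontr)
  assume "\<not> num_mult_ge p \<le> num_mult_ge q"
  then have q: "num_mult_ge q < num_mult_ge p" "num_mult_ge q < n"
    using num_mult_ge_le[of p] by auto
  then have "p \<le> m (num_mult_ge q)"
    using less_num_mult_ge_iff[OF q(2)] by blast
  then show False
    using less_num_mult_ge_iff[OF q(2), of q] assms by simp
qed

lemma num_mult_ge_1_le_kernel_dim: "num_mult_ge 1 \<le> kernel_dim (T l0)"
proof (rule card_le_kernel_dim[of "T l0" n n "UR l0" n])
  show "T l0 \<in> carrier_mat n n" "UR l0 \<in> carrier_mat n n" "num_mult_ge 1 \<le> n"
    by (rule T_carrier UR_carrier num_mult_ge_le)+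
  show "c = 0\<^sub>v n" if "c \<in> carrier_vec n" "UR l0 *\<^sub>v c = 0\<^sub>v n" for c
    using that by (rule UR_l0_inj)
  fix j assume j: "j < num_mult_ge 1"
  then have jn: "j < n" and mj: "1 \<le> m j"
    using num_mult_ge_le[of 1] less_num_mult_ge_iff[of j 1] by auto
  have col_UR: "col (UR l0) j \<in> carrier_vec n"
    by (rule col_carrier_vec[OF jn UR_carrier])
  have "UL l0 *\<^sub>v (T l0 *\<^sub>v col (UR l0) j) = col (UL l0 * T l0 * UR l0) j"
    using col_mult2[OF mult_carrier_mat[OF UL_carrier T_carrier] UR_carrier jn]
      assoc_mult_mat_vec[OF UL_carrier T_carrier col_UR] by simp
  also have "\<dots> = 0\<^sub>v n"
    unfolding eventually_nhds_x_imp_x[OF smith] using jn mj by (intro eq_vecI) (simp_all add: mat_diag_def)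
  finally show "T l0 *\<^sub>v col (UR l0) j = 0\<^sub>v n"
    by (rule UL_l0_inj[OF mult_mat_vec_carrier[OF T_carrier col_UR]])
qed

end

section \<open>Right canonical matrices\<close>

locale right_canonical_setting = local_smith_form +
  fixes \<Omega> :: "complex set" and r :: nat and Y :: "complex \<Rightarrow> complex mat"
  assumes open_\<Omega>: "open \<Omega>" and l0_in_\<Omega>: "l0 \<in> \<Omega>"
    and r_eq: "r = kernel_dim (T l0)"
    and canonical: "right_canonical_matrix n r \<Omega> T l0 m Y"
begin

lemma Y_hol: "hol_mat n r \<Omega> Y"
  using canonical unfolding right_canonical_matrix_def by blast

lemma Y_carrier: "Y z \<in> carrier_mat n r"
  using Y_hol unfolding hol_mat_def by blast

lemma Y_analytic: "i < n \<Longrightarrow> j < r \<Longrightarrow> (\<lambda>z. Y z $$ (i,j)) analytic_on {l0}"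
  using hol_mat_analytic_at[OF Y_hol open_\<Omega> l0_in_\<Omega>] by blast

lemma Y_l0_inj: "c \<in> carrier_vec r \<Longrightarrow> Y l0 *\<^sub>v c = 0\<^sub>v n \<Longrightarrow> c = 0\<^sub>v r"
  using canonical unfolding right_canonical_matrix_def by blast

lemma col_Y_analytic:
  assumes "j < r"
  shows "analytic_vec n l0 (\<lambda>z. col (Y z) j)"
proof -
  have "col (Y z) j $ l = Y z $$ (l,j)" if "l < n" for z l
    using Y_carrier[of z] that assms by simp
  then show ?thesis
    unfolding analytic_vec_def using col_carrier_vec[OF assms Y_carrier] Y_analytic assms by simp
qed

definition nu :: "nat \<Rightarrow> nat" where
  "nu j = root_mult n T l0 (\<lambda>z. col (Y z) j)"

lemma nu_antimono: "i \<le> j \<Longrightarrow> j < r \<Longrightarrow> nu j \<le> nu i"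
  using canonical unfolding right_canonical_matrix_def nu_def by blast

lemma sum_nu: "(\<Sum>i<r. nu i) = (\<Sum>i<r. m i)"
  using canonical unfolding right_canonical_matrix_def nu_def by blast

lemma vanishes_to_order_nu:
  assumes "j < r"
  shows "vanishes_to_order n l0 (nu j) (\<lambda>z. T z *\<^sub>v col (Y z) j)"
  unfolding nu_def root_mult_def
proof (rule vanishes_to_zero_order_vec)
  show "analytic_vec n l0 (\<lambda>z. T z *\<^sub>v col (Y z) j)"
    using T unfolding hol0_mat_def by (intro analytic_vec_mult_mat_vec[OF T_carrier _ col_Y_analytic[OF assms]]) auto
qed

definition W :: "complex mat" where
  "W = adj_mat (UR l0) * Y l0"

lemma W_carrier: "W \<in> carrier_mat n r"
  unfolding W_def using adj_mat(1)[OF UR_carrier] Y_carrier by (rule mult_carrier_mat)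

lemma W_inj:
  assumes "c \<in> carrier_vec r" "W *\<^sub>v c = 0\<^sub>v n"
  shows "c = 0\<^sub>v r"
proof -
  have "adj_mat (UR l0) *\<^sub>v (Y l0 *\<^sub>v c) = 0\<^sub>v n"
    using assms(2) assoc_mult_mat_vec[OF adj_mat(1)[OF UR_carrier] Y_carrier assms(1)] unfolding W_def by simp
  then have "Y l0 *\<^sub>v c = 0\<^sub>v n"
    by (rule adj_UR_l0_inj[OF mult_mat_vec_carrier[OF Y_carrier assms(1)]])
  then show ?thesis
    by (rule Y_l0_inj[OF assms(1)])
qed

lemma eq_Y_l0_mult_if_adj_eq_W_mult:
  assumes u: "u \<in> carrier_vec n" and c: "c \<in> carrier_vec r"
    and eq: "adj_mat (UR l0) *\<^sub>v u = W *\<^sub>v c"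
  shows "u = Y l0 *\<^sub>v c"
proof -
  have Yc: "Y l0 *\<^sub>v c \<in> carrier_vec n"
    by (rule mult_mat_vec_carrier[OF Y_carrier c])
  have "adj_mat (UR l0) *\<^sub>v u = adj_mat (UR l0) *\<^sub>v (Y l0 *\<^sub>v c)"
    unfolding eq W_def by (rule assoc_mult_mat_vec[OF adj_mat(1)[OF UR_carrier] Y_carrier c])
  then have "adj_mat (UR l0) *\<^sub>v (u - Y l0 *\<^sub>v c) = 0\<^sub>v n"
    using mult_minus_distrib_mat_vec[OF adj_mat(1)[OF UR_carrier] u Yc]
      mult_mat_vec_carrier[OF adj_mat(1)[OF UR_carrier] Yc] by simp
  then have "u - Y l0 *\<^sub>v c = 0\<^sub>v n"
    by (rule adj_UR_l0_inj[rotated]) (use u Yc in simp)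
  then show ?thesis
    by (rule vec_eq_of_diff_eq_0[OF u Yc])
qed

lemma W_entry_eq_0:
  assumes j: "j < r" and Tj: "vanishes_to_order n l0 p (\<lambda>z. T z *\<^sub>v col (Y z) j)"
    and l: "num_mult_ge p \<le> l" "l < n"
  shows "W $$ (l,j) = 0"
proof -
  have "W $$ (l,j) = col W j $ l"
    using W_carrier j l(2) by simp
  also have "\<dots> = (adj_mat (UR l0) *\<^sub>v col (Y l0) j) $ l"
    unfolding W_def using col_mult2[OF adj_mat(1)[OF UR_carrier] Y_carrier j] by simp
  also have "\<dots> = 0"
    using less_num_mult_ge_iff[OF l(2), of p] l(1)
    by (intro adj_UR_mult_vec_eq_0[OF col_Y_analytic[OF j] Tj l(2)]) simp
  finally show ?thesis .
qed

lemma nu_le_m: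
  assumes i: "i < r"
  shows "nu i \<le> m i"
proof -
  have "Suc i \<le> num_mult_ge (nu i)"
  proof (rule indep_supported_family_card_le[where x = "\<lambda>j l. W $$ (l,j)" and n = n])
    show "W $$ (l,j) = 0" if "j < Suc i" "num_mult_ge (nu i) \<le> l" "l < n" for j l
    proof (rule W_entry_eq_0[OF _ _ that(2,3)])
      show "j < r" using that(1) i by simp
      show "vanishes_to_order n l0 (nu i) (\<lambda>z. T z *\<^sub>v col (Y z) j)"
        using vanishes_to_order_mono[OF vanishes_to_order_nu nu_antimono] that(1) i by simp
    qed
    show "\<forall>j<Suc i. c j = 0" if "\<forall>l<n. (\<Sum>j<Suc i. c j * W $$ (l,j)) = 0" for c
      using inj_mat_cols_indep[OF W_carrier W_inj _ that] i by simp
  qed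
  then have i_less: "i < num_mult_ge (nu i)"
    by (simp only: Suc_le_eq)
  moreover have "i < n"
    using i_less num_mult_ge_le[of "nu i"] by linarith
  ultimately show ?thesis
    using less_num_mult_ge_iff by blast
qed

lemma nu_eq_m:
  assumes "i < r"
  shows "nu i = m i"
proof (rule ccontr)
  assume "nu i \<noteq> m i"
  then have "nu i < m i"
    using nu_le_m[OF assms] by simp
  then have "(\<Sum>j<r. nu j) < (\<Sum>j<r. m j)"
    using nu_le_m assms by (intro sum_strict_mono_ex1) auto
  then show False
    using sum_nu by simp
qed

lemma num_mult_ge_le_r: "1 \<le> p \<Longrightarrow> num_mult_ge p \<le> r"
  using le_trans[OF num_mult_ge_antimono num_mult_ge_1_le_kernel_dim] r_eq by simp

text \<open>\<open>u(l0)\<close> is a combination of the columns \<open>y\<^sub>i(l0)\<close> with \<open>m\<^sub>i \<ge> p\<close>: after the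
  change of coordinates \<open>adj(U\<^sub>R(l0))\<close>, all these vectors are supported in the first
  \<open>num_mult_ge p\<close> coordinates, and there are as many of them, independent, as coordinates.\<close>
lemma value_in_span:
  assumes u: "analytic_vec n l0 u" and Tu: "vanishes_to_order n l0 p (\<lambda>z. T z *\<^sub>v u z)"
    and p: "1 \<le> p"
  obtains c where "c \<in> carrier_vec r" "\<And>i. i < r \<Longrightarrow> c $ i \<noteq> 0 \<Longrightarrow> p \<le> m i" "u l0 = Y l0 *\<^sub>v c"
proof -
  define s where "s = num_mult_ge p"
  have s: "s \<le> r" "s \<le> n"
    unfolding s_def using num_mult_ge_le_r[OF p] num_mult_ge_le by auto
  have less_s_iff: "j < s \<longleftrightarrow> p \<le> m j" if "j < n" for j
    unfolding s_def using less_num_mult_ge_iff[OF that] .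
  have uc: "u l0 \<in> carrier_vec n"
    using u unfolding analytic_vec_def by blast
  obtain a where a: "\<forall>l<n. (adj_mat (UR l0) *\<^sub>v u l0) $ l = (\<Sum>j<s. a j * W $$ (l,j))"
  proof -
    have "\<exists>a. \<forall>l<n. (adj_mat (UR l0) *\<^sub>v u l0) $ l = (\<Sum>j<s. a j * W $$ (l,j))"
    proof (rule indep_supported_family_spans[OF s(2)])
      show "W $$ (l,j) = 0" if "j < s" "s \<le> l" "l < n" for j l
      proof (rule W_entry_eq_0)
        show "j < r" using that(1) s by simp
        have "p \<le> nu j"
          using less_s_iff[of j] nu_eq_m[of j] that s by simp
        then show "vanishes_to_order n l0 p (\<lambda>z. T z *\<^sub>v col (Y z) j)"
          using vanishes_to_order_mono[OF vanishes_to_order_nu] \<open>j < r\<close> by blast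
      qed (use that s_def in auto)
      show "\<forall>j<s. c j = 0" if "\<forall>l<n. (\<Sum>j<s. c j * W $$ (l,j)) = 0" for c
        using inj_mat_cols_indep[OF W_carrier W_inj s(1) that] .
      show "(adj_mat (UR l0) *\<^sub>v u l0) $ l = 0" if "s \<le> l" "l < n" for l
        using less_s_iff[of l] that by (intro adj_UR_mult_vec_eq_0[OF u Tu]) auto
    qed
    then show ?thesis using that by blast
  qed
  define c where "c = vec r (\<lambda>j. if j < s then a j else 0)"
  have c: "c \<in> carrier_vec r"
    unfolding c_def by simp
  have "adj_mat (UR l0) *\<^sub>v u l0 = W *\<^sub>v c"
  proof (rule eq_vecI)
    fix l assume "l < dim_vec (W *\<^sub>v c)"
    then have l: "l < n"
      using W_carrier by simp
    have "(W *\<^sub>v c) $ l = (\<Sum>j<s. W $$ (l,j) * a j)"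
      unfolding c_def by (rule mult_mat_vec_zero_ext_index[OF W_carrier s(1) l])
    then show "(adj_mat (UR l0) *\<^sub>v u l0) $ l = (W *\<^sub>v c) $ l"
      using a l by (simp add: mult.commute)
  qed (use adj_mat(1)[OF UR_carrier[of l0]] W_carrier in simp)
  then have "u l0 = Y l0 *\<^sub>v c"
    by (rule eq_Y_l0_mult_if_adj_eq_W_mult[OF uc c])
  moreover have "p \<le> m i" if "i < r" "c $ i \<noteq> 0" for i
    using that less_s_iff[of i] s unfolding c_def by (auto split: if_splits)
  ultimately show ?thesis
    using that c by blast
qed

definition basis_fun :: "nat \<times> nat \<Rightarrow> complex \<Rightarrow> complex vec" where
  "basis_fun = (\<lambda>(i, j) z. Y z *\<^sub>v (mat_diag r (\<lambda>l. inverse ((z - l0) ^ m l))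
                        *\<^sub>v ((z - l0) ^ (j - 1) \<cdot>\<^sub>v unit_vec r i)))"

abbreviation basis_index :: "(nat \<times> nat) set" where
  "basis_index \<equiv> {(i, j). i < r \<and> 1 \<le> j \<and> j \<le> m i}"

lemma basis_index_Sigma: "basis_index = Sigma {..<r} (\<lambda>i. {1..m i})"
  by auto

lemma finite_basis_index: "finite basis_index"
  unfolding basis_index_Sigma by simp

lemma sum_basis_index: "(\<Sum>k\<in>basis_index. f k) = (\<Sum>i<r. \<Sum>j=1..m i. f (i, j))"
  unfolding basis_index_Sigma by (simp add: sum.Sigma)

lemma basis_fun_eq:
  assumes i: "i < r"
  shows "basis_fun (i, j) z = ((z - l0) ^ (j - 1) / (z - l0) ^ m i) \<cdot>\<^sub>v col (Y z) i"
proof -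
  let ?a = "(z - l0) ^ (j - 1) / (z - l0) ^ m i"
  have "mat_diag r (\<lambda>l. inverse ((z - l0) ^ m l)) *\<^sub>v ((z - l0) ^ (j - 1) \<cdot>\<^sub>v unit_vec r i)
      = ?a \<cdot>\<^sub>v unit_vec r i"
  proof (rule eq_vecI)
    fix t assume "t < dim_vec (?a \<cdot>\<^sub>v unit_vec r i)"
    then have t: "t < r" by simp
    show "(mat_diag r (\<lambda>l. inverse ((z - l0) ^ m l)) *\<^sub>v ((z - l0) ^ (j - 1) \<cdot>\<^sub>v unit_vec r i)) $ t
        = (?a \<cdot>\<^sub>v unit_vec r i) $ t"
      by (subst mat_diag_mult_vec_index[OF _ t]) (use t i in \<open>auto simp: field_simps\<close>)
  qed (simp add: mat_diag_def)
  then show ?thesis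
    unfolding basis_fun_def using mult_mat_vec[OF Y_carrier unit_vec_carrier] mult_mat_vec_unit_vec[OF Y_carrier i]
    by simp
qed

lemma basis_fun_carrier: "i < r \<Longrightarrow> basis_fun (i, j) z \<in> carrier_vec n"
  unfolding basis_fun_eq using col_carrier_vec[OF _ Y_carrier] by simp

lemma basis_fun_index:
  assumes "i < r" "l < n"
  shows "basis_fun (i, j) z $ l = (z - l0) ^ (j - 1) / (z - l0) ^ m i * Y z $$ (l, i)"
  unfolding basis_fun_eq[OF assms(1)] using Y_carrier[of z] assms by simp

lemma basis_fun_meromorphic:
  assumes i: "i < r"
  shows "mero_vec n \<Omega> (basis_fun (i, j))"
  unfolding mero_vec_def
proof (intro conjI allI impI)
  show "basis_fun (i, j) z \<in> carrier_vec n" for z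
    by (rule basis_fun_carrier[OF i])
  fix l assume l: "l < n"
  have "(\<lambda>z. Y z $$ (l, i)) holomorphic_on \<Omega>"
    using Y_hol l i unfolding hol_mat_def by blast
  then have "(\<lambda>z. Y z $$ (l, i)) meromorphic_on \<Omega>"
    using open_\<Omega> by (simp add: analytic_on_imp_meromorphic_on analytic_on_open)
  then have "(\<lambda>z. (z - l0) ^ (j - 1) / (z - l0) ^ m i * Y z $$ (l, i)) meromorphic_on \<Omega>"
    by (intro meromorphic_intros)
  then show "(\<lambda>z. basis_fun (i, j) z $ l) meromorphic_on \<Omega>"
    unfolding basis_fun_index[OF i l] .
qed

lemma T_basis_fun_hol0:
  assumes i: "i < r"
  shows "hol0_vec n l0 (\<lambda>z. T z *\<^sub>v basis_fun (i, j) z)"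
proof -
  obtain g where g: "analytic_vec n l0 g"
    and Tg: "\<forall>\<^sub>F z in at l0. T z *\<^sub>v col (Y z) i = (z - l0) ^ m i \<cdot>\<^sub>v g z"
    using vanishes_to_order_nu[OF i] nu_eq_m[OF i] unfolding vanishes_to_order_def by auto
  have "\<forall>\<^sub>F z in at l0. z \<noteq> l0"
    by (simp add: eventually_at_filter)
  with Tg have "\<forall>\<^sub>F z in at l0. T z *\<^sub>v basis_fun (i, j) z = (z - l0) ^ (j - 1) \<cdot>\<^sub>v g z"
  proof eventually_elim
    case (elim z)
    have "T z *\<^sub>v basis_fun (i, j) z
        = ((z - l0) ^ (j - 1) / (z - l0) ^ m i) \<cdot>\<^sub>v ((z - l0) ^ m i \<cdot>\<^sub>v g z)"
      unfolding basis_fun_eq[OF i] mult_mat_vec[OF T_carrier col_carrier_vec[OF i Y_carrier]] elim(1) ..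
    also have "\<dots> = (z - l0) ^ (j - 1) \<cdot>\<^sub>v g z"
      using elim(2) by (simp add: smult_smult_assoc)
    finally show ?case .
  qed
  moreover have "analytic_vec n l0 (\<lambda>z. (z - l0) ^ (j - 1) \<cdot>\<^sub>v g z)"
    by (rule analytic_vec_smult[OF _ g]) (intro analytic_intros)
  ultimately show ?thesis
    by (rule hol0_vecI[rotated])
qed

text \<open>\<open>basis_fun (i, j)\<close> has a pole of order \<open>basis_pole (i, j)\<close> at \<open>l0\<close>.\<close>
definition basis_pole :: "nat \<times> nat \<Rightarrow> nat" where
  "basis_pole = (\<lambda>(i, j). m i + 1 - j)"

lemma power_mult_lin_comb_basis_fun:
  assumes P: "\<And>k. k \<in> basis_index \<Longrightarrow> c k \<noteq> 0 \<Longrightarrow> basis_pole k \<le> P"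
    and z: "z \<noteq> l0" and l: "l < n"
  shows "(z - l0) ^ P * lin_comb n basis_index c basis_fun z $ l
    = (\<Sum>(i, j)\<in>basis_index. c (i, j) * (z - l0) ^ (P - basis_pole (i, j)) * Y z $$ (l, i))"
  unfolding lin_comb_index[OF l] sum_distrib_left
proof (rule sum.cong[OF refl], clarify)
  fix i j assume ij: "i < r" "1 \<le> j" "j \<le> m i"
  show "(z - l0) ^ P * (c (i, j) * basis_fun (i, j) z $ l)
      = c (i, j) * (z - l0) ^ (P - basis_pole (i, j)) * Y z $$ (l, i)"
  proof (cases "c (i, j) = 0")
    case False
    then have "m i \<le> P + (j - 1)"
      using P[of "(i, j)"] ij by (auto simp: basis_pole_def)
    then have "(z - l0) ^ P * ((z - l0) ^ (j - 1) / (z - l0) ^ m i) = (z - l0) ^ (P - basis_pole (i, j))"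
      using z ij by (subst power_mult_divide_power) (auto simp: basis_pole_def)
    moreover have "(z - l0) ^ P * (c (i, j) * basis_fun (i, j) z $ l)
        = c (i, j) * ((z - l0) ^ P * ((z - l0) ^ (j - 1) / (z - l0) ^ m i)) * Y z $$ (l, i)"
      unfolding basis_fun_index[OF ij(1) l] by (simp only: mult_ac)
    ultimately show ?thesis
      by simp
  qed simp
qed

text \<open>Multiplying a combination by \<open>\<chi>\<^sub>0^P\<close>, \<open>P\<close> the largest pole order carrying a
  nonzero coefficient, and letting \<open>z \<rightarrow> l0\<close> leaves only the terms of pole order \<open>P\<close>.\<close>
lemma basis_fun_leading_terms_vanish:
  assumes hol: "hol0_vec n l0 (lin_comb n basis_index c basis_fun)"
    and P: "\<And>k. k \<in> basis_index \<Longrightarrow> c k \<noteq> 0 \<Longrightarrow> basis_pole k \<le> P" and "1 \<le> P"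
    and l: "l < n"
  shows "(\<Sum>(i, j)\<in>basis_index. c (i, j) * 0 ^ (P - basis_pole (i, j)) * Y l0 $$ (l, i)) = 0"
proof -
  define E where "E z = (\<Sum>(i, j)\<in>basis_index. c (i, j) * (z - l0) ^ (P - basis_pole (i, j)) * Y z $$ (l, i))" for z
  have "\<forall>\<^sub>F z in at l0. z \<noteq> l0"
    by (simp add: eventually_at_filter)
  then have "\<forall>\<^sub>F z in at l0. (z - l0) ^ P * lin_comb n basis_index c basis_fun z $ l = E z"
    unfolding E_def by eventually_elim (rule power_mult_lin_comb_basis_fun[OF P _ l])
  moreover have "((\<lambda>z. (z - l0) ^ P * lin_comb n basis_index c basis_fun z $ l) \<longlongrightarrow> 0) (at l0)"
    using hol l \<open>1 \<le> P\<close> unfolding hol0_vec_iff by (intro hol0_power_mult_tendsto_0) auto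
  ultimately have "(E \<longlongrightarrow> 0) (at l0)"
    by (rule tendsto_cong[THEN iffD1])
  moreover have "E analytic_on {l0}"
    unfolding E_def
  proof (rule analytic_on_sum)
    fix k assume k: "k \<in> basis_index"
    obtain i j where kij: "k = (i, j)"
      by (cases k)
    have "(\<lambda>z. Y z $$ (l, i)) analytic_on {l0}"
      using Y_analytic l k kij by simp
    then show "(\<lambda>z. case k of (i, j) \<Rightarrow> c (i, j) * (z - l0) ^ (P - basis_pole (i, j)) * Y z $$ (l, i))
        analytic_on {l0}"
      unfolding kij prod.case by (intro analytic_intros)
  qed
  then have "isCont E l0"
    by (rule analytic_at_imp_isCont)
  ultimately have "E l0 = 0"
    unfolding isCont_def by (rule tendsto_unique[OF at_neq_bot, rotated])
  then show ?thesis
    unfolding E_def by simp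
qed

lemma basis_fun_leading_coeffs_eq_0:
  assumes hol: "hol0_vec n l0 (lin_comb n basis_index c basis_fun)"
    and P: "\<And>k. k \<in> basis_index \<Longrightarrow> c k \<noteq> 0 \<Longrightarrow> basis_pole k \<le> P" and P_pos: "1 \<le> P"
  shows "Y l0 *\<^sub>v vec r (\<lambda>i. if P \<le> m i then c (i, m i + 1 - P) else 0) = 0\<^sub>v n"
proof (rule eq_vecI)
  define a where "a = vec r (\<lambda>i. if P \<le> m i then c (i, m i + 1 - P) else 0)"
  fix l assume "l < dim_vec (0\<^sub>v n :: complex vec)"
  then have l: "l < n" by simp
  have pw: "c (i, j) * 0 ^ (P - basis_pole (i, j)) * Y l0 $$ (l, i)
      = (if j = m i + 1 - P then c (i, j) * Y l0 $$ (l, i) else 0)"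
    if "(i, j) \<in> basis_index" for i j
    using that P[OF that] P_pos by (cases "c (i, j) = 0") (auto simp: basis_pole_def)
  have "(\<Sum>(i, j)\<in>basis_index. c (i, j) * 0 ^ (P - basis_pole (i, j)) * Y l0 $$ (l, i))
      = (\<Sum>i<r. \<Sum>j=1..m i. if j = m i + 1 - P then c (i, j) * Y l0 $$ (l, i) else 0)"
    unfolding sum_basis_index by (intro sum.cong refl) (simp add: pw)
  also have "\<dots> = (\<Sum>i<r. Y l0 $$ (l, i) * a $ i)"
    using P_pos by (intro sum.cong refl) (auto simp: a_def mult.commute)
  also have "\<dots> = (Y l0 *\<^sub>v a) $ l"
    using mult_mat_vec_index[OF Y_carrier _ l, of a] by (simp add: a_def)
  finally show "(Y l0 *\<^sub>v vec r (\<lambda>i. if P \<le> m i then c (i, m i + 1 - P) else 0)) $ l = 0\<^sub>v n $ l"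
    using basis_fun_leading_terms_vanish[OF hol P P_pos l] l by (simp add: a_def)
qed (use Y_carrier[of l0] in simp)

lemma basis_fun_independent:
  assumes hol: "hol0_vec n l0 (lin_comb n basis_index c basis_fun)"
  shows "\<forall>k\<in>basis_index. c k = 0"
proof (rule ccontr)
  define NZ where "NZ = {k \<in> basis_index. c k \<noteq> 0}"
  assume "\<not> (\<forall>k\<in>basis_index. c k = 0)"
  then have "NZ \<noteq> {}"
    unfolding NZ_def by blast
  moreover have "finite NZ"
    unfolding NZ_def using finite_basis_index by simp
  ultimately have "Max (basis_pole ` NZ) \<in> basis_pole ` NZ"
    by simp
  then obtain i0 j0 where k0: "(i0, j0) \<in> NZ" "basis_pole (i0, j0) = Max (basis_pole ` NZ)"
    by auto
  define P where "P = basis_pole (i0, j0)"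
  have P: "basis_pole k \<le> P" if "k \<in> basis_index" "c k \<noteq> 0" for k
    unfolding P_def k0(2) using \<open>finite NZ\<close> that by (simp add: NZ_def)
  have i0: "i0 < r" "1 \<le> j0" "j0 \<le> m i0" "c (i0, j0) \<noteq> 0"
    using k0(1) unfolding NZ_def by auto
  then have P_pos: "1 \<le> P" "P \<le> m i0"
    unfolding P_def basis_pole_def by auto
  have "vec r (\<lambda>i. if P \<le> m i then c (i, m i + 1 - P) else 0) = 0\<^sub>v r"
    by (rule Y_l0_inj[OF _ basis_fun_leading_coeffs_eq_0[OF hol P P_pos(1)]]) simp
  then have "vec r (\<lambda>i. if P \<le> m i then c (i, m i + 1 - P) else 0) $ i0 = 0\<^sub>v r $ i0"
    by (rule arg_cong)
  then have "(if P \<le> m i0 then c (i0, m i0 + 1 - P) else 0) = 0"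
    using i0(1) by simp
  moreover have "m i0 + 1 - P = j0"
    using i0 unfolding P_def basis_pole_def by simp
  ultimately show False
    using i0 P_pos by simp
qed

lemma lin_comb_basis_fun_leading:
  assumes c: "c \<in> carrier_vec r" "\<And>i. i < r \<Longrightarrow> c $ i \<noteq> 0 \<Longrightarrow> Suc p \<le> m i"
    and z: "z \<noteq> l0"
  shows "lin_comb n basis_index (\<lambda>(i, j). if j = m i - p then c $ i else 0) basis_fun z
    = inverse ((z - l0) ^ Suc p) \<cdot>\<^sub>v (Y z *\<^sub>v c)"
proof (rule eq_vecI)
  fix l assume "l < dim_vec (inverse ((z - l0) ^ Suc p) \<cdot>\<^sub>v (Y z *\<^sub>v c))"
  then have l: "l < n"
    using Y_carrier[of z] by simp
  have column: "(\<Sum>j=1..m i. (if j = m i - p then c $ i else 0) * basis_fun (i, j) z $ l)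
      = inverse ((z - l0) ^ Suc p) * (Y z $$ (l, i) * c $ i)" if i: "i < r" for i
  proof (cases "c $ i = 0")
    case False
    then have p: "Suc p \<le> m i"
      using c(2) i by blast
    have "m i - p - 1 + Suc p = m i"
      using p by simp
    then have "(z - l0) ^ (m i - p - 1) * (z - l0) ^ Suc p = (z - l0) ^ m i"
      by (metis power_add)
    then have "(z - l0) ^ (m i - p - 1) / (z - l0) ^ m i = inverse ((z - l0) ^ Suc p)"
      using z by (simp add: field_simps)
    moreover have "(\<Sum>j=1..m i. (if j = m i - p then c $ i else 0) * basis_fun (i, j) z $ l)
        = c $ i * basis_fun (i, m i - p) z $ l"
      using p by (simp add: if_distrib[of "\<lambda>x. x * _"] sum.delta' cong: if_cong)
    ultimately show ?thesis
      unfolding basis_fun_index[OF i l] by (simp add: mult_ac)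
  qed simp
  have "lin_comb n basis_index (\<lambda>(i, j). if j = m i - p then c $ i else 0) basis_fun z $ l
      = (\<Sum>i<r. inverse ((z - l0) ^ Suc p) * (Y z $$ (l, i) * c $ i))"
    unfolding lin_comb_index[OF l] sum_basis_index using column by simp
  also have "\<dots> = (inverse ((z - l0) ^ Suc p) \<cdot>\<^sub>v (Y z *\<^sub>v c)) $ l"
    using mult_mat_vec_index[OF Y_carrier c(1) l] Y_carrier[of z] l by (simp add: sum_distrib_left)
  finally show "lin_comb n basis_index (\<lambda>(i, j). if j = m i - p then c $ i else 0) basis_fun z $ l
      = (inverse ((z - l0) ^ Suc p) \<cdot>\<^sub>v (Y z *\<^sub>v c)) $ l" .
qed (use Y_carrier[of z] in simp)

lemma power_smult_diff_lin_comb_basis_fun_leading: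
  assumes c: "c \<in> carrier_vec r" "\<And>i. i < r \<Longrightarrow> c $ i \<noteq> 0 \<Longrightarrow> Suc p \<le> m i"
    and z: "z \<noteq> l0" and y: "y \<in> carrier_vec n" and l: "l < n"
  shows "((z - l0) ^ p \<cdot>\<^sub>v (y - lin_comb n basis_index (\<lambda>(i, j). if j = m i - p then c $ i else 0) basis_fun z)) $ l
    = ((z - l0) ^ Suc p * y $ l - (Y z *\<^sub>v c) $ l) / (z - l0)"
proof -
  let ?lc = "lin_comb n basis_index (\<lambda>(i, j). if j = m i - p then c $ i else 0) basis_fun z"
  have "?lc = inverse ((z - l0) ^ Suc p) \<cdot>\<^sub>v (Y z *\<^sub>v c)"
    by (rule lin_comb_basis_fun_leading[OF c z])
  then have lc: "?lc $ l = inverse ((z - l0) ^ Suc p) * (Y z *\<^sub>v c) $ l"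
    using Y_carrier[of z] l by simp
  have "((z - l0) ^ p \<cdot>\<^sub>v (y - ?lc)) $ l = (z - l0) ^ p * (y $ l - ?lc $ l)"
    using y l by simp
  moreover have "(z - l0) ^ p * (a - inverse ((z - l0) ^ Suc p) * b) = ((z - l0) ^ Suc p * a - b) / (z - l0)"
    for a b
    using z by (simp add: field_simps)
  ultimately show ?thesis
    unfolding lc by simp
qed

text \<open>If \<open>y\<close> has a pole of order at most \<open>p + 1\<close>, then
  \<open>u = \<chi>\<^sub>0^{p+1} y\<close> is holomorphic with \<open>T u\<close> vanishing to order \<open>p + 1\<close>, so \<open>u(l0) = Y(l0) c\<close>
  with \<open>c\<^sub>i = 0\<close> unless \<open>m\<^sub>i > p\<close>; subtracting \<open>\<Sum> c\<^sub>i \<chi>\<^sub>0^{-(p+1)} y\<^sub>i\<close> lowers the pole order.\<close>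
lemma pole_order_reduction:
  assumes y: "\<And>z. y z \<in> carrier_vec n" and hy: "hol0_vec n l0 (\<lambda>z. (z - l0) ^ Suc p \<cdot>\<^sub>v y z)"
    and Ty: "hol0_vec n l0 (\<lambda>z. T z *\<^sub>v y z)"
  obtains c where "hol0_vec n l0 (\<lambda>z. (z - l0) ^ p \<cdot>\<^sub>v (y z - lin_comb n basis_index c basis_fun z))"
proof -
  obtain u where u: "analytic_vec n l0 u" and yu: "\<forall>\<^sub>F z in at l0. (z - l0) ^ Suc p \<cdot>\<^sub>v y z = u z"
    using hol0_vec_imp_analytic_vec[OF hy] y by (metis smult_carrier_vec)
  obtain g where g: "analytic_vec n l0 g" and Tyg: "\<forall>\<^sub>F z in at l0. T z *\<^sub>v y z = g z"
    using hol0_vec_imp_analytic_vec[OF Ty mult_mat_vec_carrier[OF T_carrier y]] by blast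
  have "\<forall>\<^sub>F z in at l0. T z *\<^sub>v u z = (z - l0) ^ Suc p \<cdot>\<^sub>v g z"
    using yu Tyg by eventually_elim (metis mult_mat_vec[OF T_carrier y])
  then have "vanishes_to_order n l0 (Suc p) (\<lambda>z. T z *\<^sub>v u z)"
    unfolding vanishes_to_order_def using g by blast
  then obtain c where c: "c \<in> carrier_vec r" "\<And>i. i < r \<Longrightarrow> c $ i \<noteq> 0 \<Longrightarrow> Suc p \<le> m i"
    and u0: "u l0 = Y l0 *\<^sub>v c"
    using value_in_span[OF u] by auto
  define G where "G z = u z - Y z *\<^sub>v c" for z
  have "analytic_vec r l0 (\<lambda>z. c)"
    using c(1) unfolding analytic_vec_def by auto
  then have "analytic_vec n l0 (\<lambda>z. Y z *\<^sub>v c)"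
    using Y_analytic by (intro analytic_vec_mult_mat_vec[OF Y_carrier]) auto
  then have G: "analytic_vec n l0 G"
    unfolding G_def by (rule analytic_vec_diff[OF u])
  have G0: "G l0 = 0\<^sub>v n"
    unfolding G_def u0 using mult_mat_vec_carrier[OF Y_carrier c(1)] by simp
  have "\<forall>\<^sub>F z in at l0. z \<noteq> l0"
    by (simp add: eventually_at_filter)
  with yu have ev: "\<forall>\<^sub>F z in at l0. \<forall>l<n. ((z - l0) ^ p \<cdot>\<^sub>v (y z - lin_comb n basis_index
      (\<lambda>(i, j). if j = m i - p then c $ i else 0) basis_fun z)) $ l = G z $ l / (z - l0)"
  proof eventually_elim
    case (elim z)
    have "G z $ l = (z - l0) ^ Suc p * y z $ l - (Y z *\<^sub>v c) $ l" if "l < n" for l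
      unfolding G_def elim(1)[symmetric] using y[of z] Y_carrier[of z] that by simp
    then show ?case
      using power_smult_diff_lin_comb_basis_fun_leading[OF c elim(2) y] by simp
  qed
  have "hol0_vec n l0 (\<lambda>z. (z - l0) ^ p \<cdot>\<^sub>v (y z - lin_comb n basis_index
      (\<lambda>(i, j). if j = m i - p then c $ i else 0) basis_fun z))"
    unfolding hol0_vec_iff
  proof (intro allI impI)
    fix l assume l: "l < n"
    have "hol0 l0 (\<lambda>z. G z $ l / (z - l0))"
      using G G0 l unfolding analytic_vec_def by (intro hol0_divide_linear) auto
    then show "hol0 l0 (\<lambda>z. ((z - l0) ^ p \<cdot>\<^sub>v (y z - lin_comb n basis_index
      (\<lambda>(i, j). if j = m i - p then c $ i else 0) basis_fun z)) $ l)"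
      by (rule hol0_cong[rotated]) (use ev l in \<open>auto elim: eventually_mono\<close>)
  qed
  then show ?thesis
    using that by blast
qed

lemma T_lin_comb_basis_fun_hol0: "hol0_vec n l0 (\<lambda>z. T z *\<^sub>v lin_comb n basis_index c basis_fun z)"
  using finite_basis_index T_carrier basis_fun_carrier T_basis_fun_hol0
  by (intro hol0_vec_mult_lin_comb) auto

lemma basis_fun_spanning:
  assumes "\<And>z. y z \<in> carrier_vec n" "hol0_vec n l0 (\<lambda>z. (z - l0) ^ p \<cdot>\<^sub>v y z)"
    and "hol0_vec n l0 (\<lambda>z. T z *\<^sub>v y z)"
  shows "\<exists>c. hol0_vec n l0 (\<lambda>z. y z - lin_comb n basis_index c basis_fun z)"
  using assms
proof (induction p arbitrary: y)
  case 0
  have "y z - lin_comb n basis_index (\<lambda>_. 0) basis_fun z = (z - l0) ^ 0 \<cdot>\<^sub>v y z" for z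
    using "0.prems"(1)[of z] by (intro eq_vecI) (auto simp: lin_comb_def)
  then have "hol0_vec n l0 (\<lambda>z. y z - lin_comb n basis_index (\<lambda>_. 0) basis_fun z)"
    using "0.prems"(2) by (simp only:)
  then show ?case
    by blast
next
  case (Suc p)
  obtain c where c: "hol0_vec n l0 (\<lambda>z. (z - l0) ^ p \<cdot>\<^sub>v (y z - lin_comb n basis_index c basis_fun z))"
    using pole_order_reduction[OF Suc.prems] by blast
  have "hol0_vec n l0 (\<lambda>z. T z *\<^sub>v y z - T z *\<^sub>v lin_comb n basis_index c basis_fun z)"
    using Suc.prems(3) T_lin_comb_basis_fun_hol0
      mult_mat_vec_carrier[OF T_carrier Suc.prems(1)] mult_mat_vec_carrier[OF T_carrier lin_comb_carrier]
    by (rule hol0_vec_diff)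
  then have "hol0_vec n l0 (\<lambda>z. T z *\<^sub>v (y z - lin_comb n basis_index c basis_fun z))"
    by (simp only: mult_minus_distrib_mat_vec[OF T_carrier Suc.prems(1) lin_comb_carrier])
  then obtain d where d: "hol0_vec n l0 (\<lambda>z. y z - lin_comb n basis_index c basis_fun z
      - lin_comb n basis_index d basis_fun z)"
    using Suc.IH[OF minus_carrier_vec[OF Suc.prems(1) lin_comb_carrier] c] by blast
  have "y z - lin_comb n basis_index c basis_fun z - lin_comb n basis_index d basis_fun z
      = y z - lin_comb n basis_index (\<lambda>k. c k + d k) basis_fun z" for z
    unfolding lin_comb_add using Suc.prems(1)[of z] by (intro eq_vecI) auto
  then show ?case
    using d by auto
qed

lemma basis_of_ker_Tbar_basis_fun: "basis_of_ker_Tbar n \<Omega> T l0 basis_index basis_fun"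
  unfolding basis_of_ker_Tbar_def
proof (intro conjI ballI allI impI)
  show "finite basis_index"
    by (rule finite_basis_index)
next
  fix k assume "k \<in> basis_index"
  then obtain i j where k: "k = (i, j)" "i < r"
    by auto
  show "mero_vec n \<Omega> (basis_fun k)"
    unfolding k by (rule basis_fun_meromorphic[OF k(2)])
  show "hol0_vec n l0 (\<lambda>z. T z *\<^sub>v basis_fun k z)"
    unfolding k by (rule T_basis_fun_hol0[OF k(2)])
next
  fix c k assume "hol0_vec n l0 (lin_comb n basis_index c basis_fun)" "k \<in> basis_index"
  then show "c k = 0"
    using basis_fun_independent by blast
next
  fix y assume y: "mero_vec n \<Omega> y \<and> hol0_vec n l0 (\<lambda>z. T z *\<^sub>v y z)"
  then obtain p where "hol0_vec n l0 (\<lambda>z. (z - l0) ^ p \<cdot>\<^sub>v y z)"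
    using mero_vec_imp_hol0_power_smult l0_in_\<Omega> by blast
  then show "\<exists>c. hol0_vec n l0 (\<lambda>z. y z - lin_comb n basis_index c basis_fun z)"
    using basis_fun_spanning y unfolding mero_vec_def by blast
qed

end

theorem mainTheorem18:
  fixes \<Omega> :: "complex set" and l0 :: complex and n r :: nat
    and T Y :: "complex \<Rightarrow> complex mat" and m :: "nat \<Rightarrow> nat"
  assumes "open \<Omega>" and "connected \<Omega>" and "l0 \<in> \<Omega>"
    and "hol_mat n n \<Omega> T"
    and "\<exists>z\<in>\<Omega>. det (T z) \<noteq> 0"
    and "det (T l0) = 0"
    and "r = kernel_dim (T l0)"
    and "partial_multiplicities n T l0 m"
    and "right_canonical_matrix n r \<Omega> T l0 m Y"
  shows "basis_of_ker_Tbar n \<Omega> T l0 {(i, j). i < r \<and> 1 \<le> j \<and> j \<le> m i}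
           (\<lambda>(i, j) z. Y z *\<^sub>v (mat_diag r (\<lambda>l. inverse ((z - l0) ^ m l))
                        *\<^sub>v ((z - l0) ^ (j - 1) \<cdot>\<^sub>v unit_vec r i)))"
proof -
  obtain UL UR where "hol0_mat n l0 UL" "hol0_mat n l0 UR" "det (UL l0) \<noteq> 0" "det (UR l0) \<noteq> 0"
    "\<forall>\<^sub>F z in nhds l0. UL z * T z * UR z = mat_diag n (\<lambda>i. (z - l0) ^ m i)"
    and "\<And>i j. i \<le> j \<Longrightarrow> j < n \<Longrightarrow> m j \<le> m i"
    using assms(8) unfolding partial_multiplicities_def by blast
  moreover have "hol0_mat n l0 T"
    using assms(4,1,3) by (rule hol_mat_imp_hol0_mat)
  ultimately interpret right_canonical_setting n l0 T UL UR m \<Omega> r Y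
    using assms(1,3,7,9) by unfold_locales auto
  show ?thesis
    using basis_of_ker_Tbar_basis_fun unfolding basis_fun_def .
qed

end
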